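(* Let $n\in\mathbb{N}$, $c\ge 0$, $\rho>0$, and consider the hypersurface $\bar N_\rho=\{\rho\}\times K$ of $(\bar N,g_{\bar N}^c)$ with induced metric $g_\rho^c$ and unit normal field $\nu=\frac{1}{\sqrt{f}}\frac{\partial}{\partial\rho}$, $f(\rho)=\frac{1}{4\rho^2}\frac{\rho+2c}{\rho+c}$. The eigenvalues of the shape operator $S_\rho^c$ of $\bar N_\rho$ with respect to $\nu$ are $$\sigma_1=\frac{c}{\rho+c}\sqrt{\frac{\rho+c}{\rho+2c}},\quad \sigma_2=\frac{2\rho^2+5c\rho+4c^2}{(\rho+2c)(\rho+c)}\sqrt{\frac{\rho+c}{\rho+2c}},\quad \sigma_3=\frac{\rho+4c}{\rho+2c}\sqrt{\frac{\rho+c}{\rho+2c}},\quad \sigma_4=\sqrt{\frac{\rho+c}{\rho+2c}},$$ where $\sigma_1$ and $\sigma_4$ have multiplicity $2n-2$, $\sigma_2$ has multiplicity $1$ and $\sigma_3$ has multiplicity $2$. In particular, if $c>0$ then $(\bar N_\rho,g_\rho^c)$ is strictly convex. Furthermore, the mean curvature of $(\bar N_\rho,g_\rho^c)$ is $$\mathrm{tr}(S_\rho^c)=\frac{(2n+2)\rho^2+(8n+7)c\rho+(8n+4)c^2}{(\rho+c)(\rho+2c)}\sqrt{\frac{\rho+c}{\rho+2c}}.$$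
   Context: Let $n\in\mathbb{N}$, $c\ge0$, and $B_1(0)\subset\mathbb{C}^{n-1}$ the open unit ball. Let $K=B_1(0)\times\mathbb{R}\times\mathbb{C}^n$ and $\bar N=(0,\infty)\times K$ with global coordinates $(\rho,X^a,\tilde\phi,w^0,w^a)$, $a=1,\dots,n-1$ (for $n=1$ the families $X^a,w^a$ are empty and empty sums are zero), $\|X\|^2=\sum_a|X^a|^2<1$. The metric is $g_{\bar N}^c=\frac{1}{4\rho^2}\frac{\rho+2c}{\rho+c}d\rho^2+g_\rho^c$ with $$g_\rho^c=\frac{\rho+c}{\rho}\frac{1}{1-\|X\|^2}\Big(\sum_a|dX^a|^2+\frac{1}{1-\|X\|^2}\Big|\sum_a\bar X^adX^a\Big|^2\Big)+\frac{1}{4\rho^2}\frac{\rho+c}{\rho+2c}\Big(d\tilde\phi-4\,\mathrm{Im}\Big(\bar w^0dw^0-\sum_a\bar w^adw^a\Big)+\frac{2c}{1-\|X\|^2}\mathrm{Im}\Big(\sum_a\bar X^adX^a\Big)\Big)^2$$ $$-\frac{2}{\rho}\Big(dw^0d\bar w^0-\sum_adw^ad\bar w^a\Big)+\frac{\rho+c}{\rho^2}\frac{4}{1-\|X\|^2}\Big|dw^0+\sum_aX^adw^a\Big|^2.$$ This is the one-loop deformed c-map metric on $\mathrm{SU}(n,2)/\mathrm{S}(\mathrm{U}(n)\times\mathrm{U}(2))$ (the symmetric metric for $c=0$); it is quaternionic Kähler with $\mathrm{Ric}=-2(n+2)g_{\bar N}^c$, and the level sets $\bar N_\rho=\{\rho\}\times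 K$ are orbits of an isometric group action. The shape operator is defined by $\mathrm{II}(X,Y)=(\nabla_XY)^\perp=g_\rho^c(S_\rho^cX,Y)\,\nu$. *)

theory Defs
  imports Complex_Main "Jordan_Normal_Form.Char_Poly"
begin

text \<open>Real coordinates on the open set N-bar (dimension 4n), encoded as functions nat to real:
  index 0: rho;
  indices 2a-1, 2a (a = 1..n-1): real and imaginary part of X^a;
  index 2n-1: phi-tilde;
  indices 2n+2k, 2n+2k+1 (k = 0..n-1): real and imaginary part of w^k (w^0 for k = 0).
  A tangent vector v is encoded in the same way by its components with respect to the
  coordinate fields, so that dX^a(v), dw^k(v) etc. are read off in the same manner.\<close>

definition cX :: "nat \<Rightarrow> (nat \<Rightarrow> real) \<Rightarrow> nat \<Rightarrow> complex" where
  "cX n p a = Complex (p (2*a - 1)) (p (2*a))"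

definition cphi :: "nat \<Rightarrow> (nat \<Rightarrow> real) \<Rightarrow> real" where
  "cphi n p = p (2*n - 1)"

definition cW :: "nat \<Rightarrow> (nat \<Rightarrow> real) \<Rightarrow> nat \<Rightarrow> complex" where
  "cW n p k = Complex (p (2*n + 2*k)) (p (2*n + 2*k + 1))"

definition normX2 :: "nat \<Rightarrow> (nat \<Rightarrow> real) \<Rightarrow> real" where
  "normX2 n p = (\<Sum>a\<in>{1..<n}. (cmod (cX n p a))\<^sup>2)"

definition fcoef :: "real \<Rightarrow> real \<Rightarrow> real" where
  "fcoef c \<rho> = 1 / (4 * \<rho>\<^sup>2) * ((\<rho> + 2*c) / (\<rho> + c))"

text \<open>Quadratic form of g_rho^c at the point p evaluated on the tangent vector v
  (the d rho component v 0 is ignored).\<close>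
definition grho_quad :: "nat \<Rightarrow> real \<Rightarrow> (nat \<Rightarrow> real) \<Rightarrow> (nat \<Rightarrow> real) \<Rightarrow> real" where
  "grho_quad n c p v =
    (let \<rho> = p 0; N = normX2 n p;
         SXdX = (\<Sum>a\<in>{1..<n}. cnj (cX n p a) * cX n v a);
         \<theta> = cphi n v
             - 4 * Im (cnj (cW n p 0) * cW n v 0 - (\<Sum>a\<in>{1..<n}. cnj (cW n p a) * cW n v a))
             + 2 * c / (1 - N) * Im SXdX
     in (\<rho> + c) / \<rho> * (1 / (1 - N)) *
          ((\<Sum>a\<in>{1..<n}. (cmod (cX n v a))\<^sup>2) + 1 / (1 - N) * (cmod SXdX)\<^sup>2)
        + 1 / (4 * \<rho>\<^sup>2) * ((\<rho> + c) / (\<rho> + 2*c)) * \<theta>\<^sup>2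
        - 2 / \<rho> * ((cmod (cW n v 0))\<^sup>2 - (\<Sum>a\<in>{1..<n}. (cmod (cW n v a))\<^sup>2))
        + (\<rho> + c) / \<rho>\<^sup>2 * (4 / (1 - N)) *
            (cmod (cW n v 0 + (\<Sum>a\<in>{1..<n}. cX n p a * cW n v a)))\<^sup>2)"

definition gN_quad :: "nat \<Rightarrow> real \<Rightarrow> (nat \<Rightarrow> real) \<Rightarrow> (nat \<Rightarrow> real) \<Rightarrow> real" where
  "gN_quad n c p v = fcoef c (p 0) * (v 0)\<^sup>2 + grho_quad n c p v"

definition ebasis :: "nat \<Rightarrow> nat \<Rightarrow> real" where
  "ebasis i = (\<lambda>k. if k = i then 1 else 0)"

definition gN :: "nat \<Rightarrow> real \<Rightarrow> (nat \<Rightarrow> real) \<Rightarrow> nat \<Rightarrow> nat \<Rightarrow> real" where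
  "gN n c p i j = (gN_quad n c p (\<lambda>k. ebasis i k + ebasis j k)
                   - gN_quad n c p (ebasis i) - gN_quad n c p (ebasis j)) / 2"

definition pderiv_coord :: "((nat \<Rightarrow> real) \<Rightarrow> real) \<Rightarrow> nat \<Rightarrow> (nat \<Rightarrow> real) \<Rightarrow> real" where
  "pderiv_coord F k p = (THE D. ((\<lambda>t. F (p(k := t))) has_field_derivative D) (at (p k)))"

text \<open>Christoffel symbols of the first kind of the Levi-Civita connection:
  g(nabla_{d_i} d_j, d_k) = (d_i g_jk + d_j g_ik - d_k g_ij)/2 (Koszul formula).\<close>
definition christ1 :: "nat \<Rightarrow> real \<Rightarrow> (nat \<Rightarrow> real) \<Rightarrow> nat \<Rightarrow> nat \<Rightarrow> nat \<Rightarrow> real" where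
  "christ1 n c p i j k =
     (pderiv_coord (\<lambda>q. gN n c q j k) i p + pderiv_coord (\<lambda>q. gN n c q i k) j p
      - pderiv_coord (\<lambda>q. gN n c q i j) k p) / 2"

definition nu :: "real \<Rightarrow> (nat \<Rightarrow> real) \<Rightarrow> nat \<Rightarrow> real" where
  "nu c p k = (if k = 0 then 1 / sqrt (fcoef c (p 0)) else 0)"

text \<open>g(nabla_{d_i} d_j, nu), i.e. the scalar second fundamental form of N_rho w.r.t. nu
  on the coordinate fields d_i, d_j (i, j \<ge> 1 tangent to N_rho).\<close>
definition sff :: "nat \<Rightarrow> real \<Rightarrow> (nat \<Rightarrow> real) \<Rightarrow> nat \<Rightarrow> nat \<Rightarrow> real" where
  "sff n c p i j = (\<Sum>k<4*n. nu c p k * christ1 n c p i j k)"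

text \<open>The matrix S (w.r.t. the coordinate frame d_1, ..., d_{4n-1} of T N_rho, matrix index r
  corresponding to d_{r+1}) represents the shape operator S_rho^c iff
  g_rho(S d_i, d_j) nu = II(d_i, d_j) for all tangent coordinate fields.\<close>
definition is_shape_operator :: "nat \<Rightarrow> real \<Rightarrow> (nat \<Rightarrow> real) \<Rightarrow> real mat \<Rightarrow> bool" where
  "is_shape_operator n c p S \<longleftrightarrow> S \<in> carrier_mat (4*n - 1) (4*n - 1) \<and>
     (\<forall>i < 4*n - 1. \<forall>j < 4*n - 1.
        (\<Sum>r < 4*n - 1. S $$ (r, i) * gN n c p (r + 1) (j + 1)) = sff n c p (i + 1) (j + 1))"

definition mat_trace :: "real mat \<Rightarrow> real" where
  "mat_trace S = (\<Sum>i<dim_row S. S $$ (i, i))"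

definition in_Nbar :: "nat \<Rightarrow> (nat \<Rightarrow> real) \<Rightarrow> bool" where
  "in_Nbar n p \<longleftrightarrow> p 0 > 0 \<and> normX2 n p < 1"

end

theory Submission
  imports Defs "HOL-Analysis.Convex"
begin

text \<open>
  On each orbit the induced metric \<open>g\<^sub>\<rho>\<^sup>c\<close> is a combination \<open>k\<^sub>1 A + k\<^sub>2 \<theta>\<^sup>2 + k\<^sub>3 B + k\<^sub>4 C\<close>
  of four symmetric forms that do not depend on \<open>\<rho>\<close>: the Bergman-type form \<open>A\<close> of the ball in
  the \<open>X\<close>-directions, the square of the contact form \<open>\<theta>\<close>, the indefinite form
  \<open>B = |dw\<^sup>0|\<^sup>2 - \<Sum>|dw\<^sup>a|\<^sup>2\<close> and \<open>C = 4 |dw\<^sup>0 + \<Sum>X\<^sup>a dw\<^sup>a|\<^sup>2 / (1 - |X|\<^sup>2)\<close>.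
  Since \<open>\<partial>\<^sub>\<rho>\<close> is orthogonal to the orbits, the Koszul formula gives
  \<open>II = -\<nu>\<^sup>\<rho> \<partial>\<^sub>\<rho>g\<^sub>\<rho>\<^sup>c / 2\<close>, a combination of the same four forms with the derivatives of
  the coefficients. On the explicit basis made of the \<open>\<theta>\<close>-horizontal \<open>X\<close>-directions,
  \<open>\<partial>\<^sub>\<phi>\<close>, the \<open>w\<close>-direction \<open>(1, - cnj X)\<close> and the kernel of \<open>dw\<^sup>0 + \<Sum>X\<^sup>a dw\<^sup>a\<close>,
  only one linear combination of the four coefficients survives, so these vectors are
  eigenvectors of the shape operator and the eigenvalues are quotients of such combinations.
  The metric is positive definite (Cauchy-Schwarz controls the indefinite part \<open>B\<close> by \<open>C\<close>),
  hence the shape operator is unique and similar to the diagonal matrix of eigenvalues; for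
  \<open>c > 0\<close> the coefficients of \<open>II\<close> satisfy the same sign conditions, which gives strict convexity.
\<close>

lemma nat_eq_iff_div2_parity: "(a::nat) = b \<longleftrightarrow> a div 2 = b div 2 \<and> (even a \<longleftrightarrow> even b)"
proof
  assume h: "a div 2 = b div 2 \<and> (even a \<longleftrightarrow> even b)"
  then have "a mod 2 = b mod 2"
    by (simp only: mod2_eq_if)
  with h show "a = b"
    using div_mult_mod_eq[of a 2] div_mult_mod_eq[of b 2] by linarith
qed simp

lemma cmod_sum_mult_sq_le:
  fixes X W :: "'a \<Rightarrow> complex"
  shows "(cmod (\<Sum>a\<in>I. X a * W a))\<^sup>2 \<le> (\<Sum>a\<in>I. (cmod (X a))\<^sup>2) * (\<Sum>a\<in>I. (cmod (W a))\<^sup>2)"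
proof -
  have "cmod (\<Sum>a\<in>I. X a * W a) \<le> (\<Sum>a\<in>I. cmod (X a) * cmod (W a))"
    by (rule order_trans[OF norm_sum]) (simp add: norm_mult)
  then have "(cmod (\<Sum>a\<in>I. X a * W a))\<^sup>2 \<le> (\<Sum>a\<in>I. cmod (X a) * cmod (W a))\<^sup>2"
    by (simp add: power_mono)
  also have "\<dots> \<le> (\<Sum>a\<in>I. (cmod (X a))\<^sup>2) * (\<Sum>a\<in>I. (cmod (W a))\<^sup>2)"
    by (rule Cauchy_Schwarz_ineq_sum)
  finally show ?thesis .
qed

lemma hyperbolic_form_pos:
  fixes X W :: "'a \<Rightarrow> complex" and V :: complex and N \<kappa> :: real
  assumes I: "finite I" and N_def: "N = (\<Sum>a\<in>I. (cmod (X a))\<^sup>2)" and N: "N < 1" and \<kappa>: "\<kappa> \<ge> 2"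
  defines "H \<equiv> (\<Sum>a\<in>I. (cmod (W a))\<^sup>2) - (cmod V)\<^sup>2 + \<kappa> / (1 - N) * (cmod (V + (\<Sum>a\<in>I. X a * W a)))\<^sup>2"
  shows "H \<ge> 0" and "V \<noteq> 0 \<or> (\<exists>a\<in>I. W a \<noteq> 0) \<Longrightarrow> H > 0"
proof -
  define b where "b = sqrt (\<Sum>a\<in>I. (cmod (W a))\<^sup>2)"
  define r where "r = sqrt N"
  define y where "y = (\<Sum>a\<in>I. X a * W a)"
  define t where "t = cmod (V + y)"
  have b: "b\<^sup>2 = (\<Sum>a\<in>I. (cmod (W a))\<^sup>2)" "b \<ge> 0"
    unfolding b_def by (simp_all add: sum_nonneg)
  have r: "r\<^sup>2 = N" "r \<ge> 0"
    unfolding r_def N_def by (simp_all add: sum_nonneg)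
  have N': "1 - N > 0" using N by simp
  have "(cmod y)\<^sup>2 \<le> (r * b)\<^sup>2"
    unfolding y_def power_mult_distrib r b N_def by (rule cmod_sum_mult_sq_le)
  then have "cmod y \<le> r * b"
    using r b by (simp add: power2_le_iff_abs_le)
  moreover have "cmod V \<le> t + cmod y"
    using norm_triangle_ineq4[of "V + y" y] unfolding t_def by simp
  ultimately have V: "cmod V \<le> t + r * b" by simp
  define \<Phi> where "\<Phi> = b\<^sup>2 - (t + r * b)\<^sup>2 + 2 / (1 - N) * t\<^sup>2"
  have "2 / (1 - N) * t\<^sup>2 \<le> \<kappa> / (1 - N) * t\<^sup>2"
    using \<kappa> N' by (intro mult_right_mono divide_right_mono) simp_all
  moreover have "(cmod V)\<^sup>2 \<le> (t + r * b)\<^sup>2"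
    using V by (intro power_mono) simp_all
  ultimately have H_ge: "\<Phi> \<le> H"
    unfolding H_def \<Phi>_def b(1)[symmetric] y_def[symmetric] t_def[symmetric] by linarith
  \<comment> \<open>completing the square, using \<open>r\<^sup>2 = N\<close>\<close>
  have \<Phi>: "(1 - N) * \<Phi> = ((1 - N) * b - r * t)\<^sup>2 + t\<^sup>2"
    using N' unfolding \<Phi>_def r(1)[symmetric] by (simp add: field_simps power2_eq_square)
  then have "\<Phi> \<ge> 0"
    using N' by (metis sum_power2_ge_zero zero_le_mult_iff not_less)
  then show "H \<ge> 0" using H_ge by simp
  assume nz: "V \<noteq> 0 \<or> (\<exists>a\<in>I. W a \<noteq> 0)"
  show "H > 0"
  proof (rule ccontr)
    assume "\<not> H > 0"
    then have "(1 - N) * \<Phi> \<le> 0"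
      using H_ge N' by (simp add: mult_nonneg_nonpos)
    then have "t = 0" "(1 - N) * b = 0"
      unfolding \<Phi> sum_power2_le_zero_iff by simp_all
    then have "t = 0" "b = 0" using N' by simp_all
    then have "\<forall>a\<in>I. W a = 0" "V = 0"
      using b(1) I V by (simp_all add: sum_nonneg_eq_0_iff)
    with nz show False by blast
  qed
qed

lemma kernel_trivial_left_inverse:
  fixes A :: "'a::field mat"
  assumes A: "A \<in> carrier_mat m m" and ker: "\<And>y. y \<in> carrier_vec m \<Longrightarrow> A *\<^sub>v y = 0\<^sub>v m \<Longrightarrow> y = 0\<^sub>v m"
  obtains B where "B \<in> carrier_mat m m" "B * A = 1\<^sub>m m"
proof -
  have "det A \<noteq> 0" using det_0_iff_vec_prod_zero[OF A] ker by blast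
  then have "A \<in> Units (ring_mat TYPE('a) m undefined)" by (rule det_non_zero_imp_unit[OF A])
  then show thesis using that unfolding Units_def ring_mat_def by auto
qed

lemma mat_mult_diag:
  assumes "A \<in> carrier_mat m m"
  shows "A * mat m m (\<lambda>(i, j). if i = j then d i else 0) = mat m m (\<lambda>(i, j). A $$ (i, j) * d j)"
proof (rule eq_matI)
  fix i j assume ij: "i < dim_row (mat m m (\<lambda>(i, j). A $$ (i, j) * d j))" "j < dim_col (mat m m (\<lambda>(i, j). A $$ (i, j) * d j))"
  have "(\<Sum>k = 0..<m. A $$ (i, k) * (if k = j then d k else 0))
      = (\<Sum>k = 0..<m. if k = j then A $$ (i, j) * d j else 0)"
    by (rule sum.cong) auto
  then have "(\<Sum>k = 0..<m. A $$ (i, k) * (if k = j then d k else 0)) = A $$ (i, j) * d j"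
    using ij by simp
  then show "(A * mat m m (\<lambda>(i, j). if i = j then d i else 0)) $$ (i, j) = mat m m (\<lambda>(i, j). A $$ (i, j) * d j) $$ (i, j)"
    using assms ij by (simp add: scalar_prod_def)
qed (use assms in auto)

lemma mat_trace_mult_comm:
  assumes "A \<in> carrier_mat m k" "B \<in> carrier_mat k m"
  shows "mat_trace (A * B) = mat_trace (B * A)"
proof -
  have "mat_trace (A * B) = (\<Sum>i<m. \<Sum>j<k. A $$ (i, j) * B $$ (j, i))"
    using assms by (simp add: mat_trace_def scalar_prod_def lessThan_atLeast0)
  also have "\<dots> = (\<Sum>j<k. \<Sum>i<m. B $$ (j, i) * A $$ (i, j))"
    by (subst sum.swap) (simp add: mult.commute)
  also have "\<dots> = mat_trace (B * A)"
    using assms by (simp add: mat_trace_def scalar_prod_def lessThan_atLeast0)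
  finally show ?thesis .
qed

lemma mat_trace_similar:
  assumes "similar_mat A B"
  shows "mat_trace A = mat_trace B"
proof -
  obtain m P Q where PQ: "B \<in> carrier_mat m m" "P \<in> carrier_mat m m" "Q \<in> carrier_mat m m"
      "P * Q = 1\<^sub>m m" "Q * P = 1\<^sub>m m"
    and A: "A = P * B * Q"
    using similar_matD[OF assms] by auto
  have "mat_trace A = mat_trace (Q * (P * B))"
    unfolding A using PQ by (intro mat_trace_mult_comm) auto
  also have "\<dots> = mat_trace B"
    using PQ by (simp add: assoc_mult_mat[of Q m m P m B m, symmetric])
  finally show ?thesis .
qed

definition coord_linear :: "((nat \<Rightarrow> real) \<Rightarrow> real) \<Rightarrow> bool" where
  "coord_linear L \<longleftrightarrow> (\<forall>s t x y. L (\<lambda>k. s * x k + t * y k) = s * L x + t * L y)"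

lemma coord_linear_sum:
  assumes L: "coord_linear L" and I: "finite I"
  shows "L (\<lambda>k. \<Sum>i\<in>I. y i * g i k) = (\<Sum>i\<in>I. y i * L (g i))"
  using I
proof induct
  case empty
  have "L (\<lambda>k. 0 * g i k + 0 * g i k) = 0 * L (g i) + 0 * L (g i)" for i
    using L[unfolded coord_linear_def, rule_format, where s=0 and t=0 and x="g i" and y="g i"] by blast
  then show ?case by simp
next
  case (insert i I)
  have "L (\<lambda>k. y i * g i k + 1 * (\<Sum>j\<in>I. y j * g j k))
      = y i * L (g i) + 1 * L (\<lambda>k. \<Sum>j\<in>I. y j * g j k)"
    using L[unfolded coord_linear_def, rule_format, where s="y i" and x="g i" and t=1
        and y="\<lambda>k. \<Sum>j\<in>I. y j * g j k"] by blast
  then show ?case using insert by simp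
qed

lemma coord_expand:
  assumes "\<And>k. k = 0 \<or> m < k \<Longrightarrow> v k = 0"
  shows "v = (\<lambda>k. \<Sum>r<m. v (r + 1) * ebasis (r + 1) k)"
proof
  fix k
  show "v k = (\<Sum>r<m. v (r + 1) * ebasis (r + 1) k)"
  proof (cases "k = 0 \<or> m < k")
    case True
    then show ?thesis using assms by (auto simp: ebasis_def intro!: sum.neutral)
  next
    case False
    then have "(\<Sum>r<m. v (r + 1) * ebasis (r + 1) k) = (\<Sum>r<m. if r = k - 1 then v k else 0)"
      by (intro sum.cong) (auto simp: ebasis_def)
    then show ?thesis using False by auto
  qed
qed

lemma coord_linear_expand:
  assumes "coord_linear L" "\<And>k. k = 0 \<or> m < k \<Longrightarrow> v k = 0"
  shows "L v = (\<Sum>r<m. v (r + 1) * L (ebasis (r + 1)))"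
proof -
  have "v = (\<lambda>k. \<Sum>r<m. v (r + 1) * ebasis (r + 1) k)"
    using assms(2) by (rule coord_expand)
  then have "L v = L (\<lambda>k. \<Sum>r<m. v (r + 1) * ebasis (r + 1) k)"
    by (rule arg_cong)
  also have "\<dots> = (\<Sum>r<m. v (r + 1) * L (ebasis (r + 1)))"
    by (rule coord_linear_sum[OF assms(1) finite_lessThan])
  finally show ?thesis .
qed

lemma bilinear_double_sum:
  assumes lin1: "\<And>w. coord_linear (\<lambda>v. B v w)" and lin2: "\<And>v. coord_linear (\<lambda>w. B v w)"
    and I: "finite I"
  shows "(\<Sum>i\<in>I. \<Sum>j\<in>I. y i * y j * B (g i) (g j)) = B (\<lambda>k. \<Sum>i\<in>I. y i * g i k) (\<lambda>k. \<Sum>i\<in>I. y i * g i k)"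
proof -
  let ?V = "\<lambda>k. \<Sum>i\<in>I. y i * g i k"
  have "B ?V ?V = (\<Sum>i\<in>I. y i * B (g i) ?V)"
    by (rule coord_linear_sum[OF lin1 I])
  also have "\<dots> = (\<Sum>i\<in>I. y i * (\<Sum>j\<in>I. y j * B (g i) (g j)))"
    by (simp add: coord_linear_sum[OF lin2 I])
  finally show ?thesis
    by (simp add: sum_distrib_left mult.assoc)
qed

definition functional_mat :: "nat \<Rightarrow> (nat \<Rightarrow> (nat \<Rightarrow> real) \<Rightarrow> real) \<Rightarrow> real mat" where
  "functional_mat m L = mat m m (\<lambda>(i, r). L i (ebasis (r + 1)))"

definition frame_mat :: "nat \<Rightarrow> (nat \<Rightarrow> nat \<Rightarrow> real) \<Rightarrow> real mat" where
  "frame_mat m V = mat m m (\<lambda>(r, t). V t (r + 1))"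

lemma functional_mat_mult_frame_mat:
  assumes L: "\<And>i. i < m \<Longrightarrow> coord_linear (L i)" and V: "\<And>t k. t < m \<Longrightarrow> k = 0 \<or> m < k \<Longrightarrow> V t k = 0"
  shows "functional_mat m L * frame_mat m V = mat m m (\<lambda>(i, t). L i (V t))"
proof (rule eq_matI)
  fix i t assume it: "i < dim_row (mat m m (\<lambda>(i, t). L i (V t)))" "t < dim_col (mat m m (\<lambda>(i, t). L i (V t)))"
  then have "(functional_mat m L * frame_mat m V) $$ (i, t) = (\<Sum>r<m. V t (r + 1) * L i (ebasis (r + 1)))"
    by (simp add: functional_mat_def frame_mat_def scalar_prod_def lessThan_atLeast0 mult.commute)
  also have "\<dots> = L i (V t)"
    using it by (simp add: coord_linear_expand[OF L V])
  finally show "(functional_mat m L * frame_mat m V) $$ (i, t) = mat m m (\<lambda>(i, t). L i (V t)) $$ (i, t)"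
    using it by simp
qed (simp_all add: functional_mat_def frame_mat_def)

lemma functional_mat_mult_vec:
  assumes "coord_linear (L i)" "i < m" "y \<in> carrier_vec m"
  shows "(functional_mat m L *\<^sub>v y) $ i = L i (\<lambda>k. \<Sum>r<m. y $ r * ebasis (r + 1) k)"
proof -
  have "(functional_mat m L *\<^sub>v y) $ i = (\<Sum>r<m. y $ r * L i (ebasis (r + 1)))"
    using assms by (simp add: functional_mat_def scalar_prod_def lessThan_atLeast0 mult.commute)
  also have "\<dots> = L i (\<lambda>k. \<Sum>r<m. y $ r * ebasis (r + 1) k)"
    by (rule coord_linear_sum[OF assms(1) finite_lessThan, symmetric])
  finally show ?thesis .
qed

lemma gram_mat_kernel_trivial:
  assumes lin1: "\<And>w. coord_linear (\<lambda>v. B v w)" and lin2: "\<And>v. coord_linear (\<lambda>w. B v w)"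
    and pos: "\<And>v. \<exists>i\<in>{1..m}. v i \<noteq> 0 \<Longrightarrow> B v v > 0"
    and y: "y \<in> carrier_vec m" and ker: "functional_mat m (\<lambda>i. B (ebasis (i + 1))) *\<^sub>v y = 0\<^sub>v m"
  shows "y = 0\<^sub>v m"
proof (rule ccontr)
  define V where "V = (\<lambda>k. \<Sum>r<m. y $ r * ebasis (r + 1) k)"
  assume "y \<noteq> 0\<^sub>v m"
  then obtain r where r: "r < m" "y $ r \<noteq> 0"
    using y by (metis eq_vecI carrier_vecD index_zero_vec)
  have "V (r + 1) = (\<Sum>r'<m. if r' = r then y $ r else 0)"
    unfolding V_def by (intro sum.cong) (auto simp: ebasis_def)
  then have "V (r + 1) \<noteq> 0" using r by simp
  then have "B V V > 0" using pos r(1) by fastforce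
  moreover have "B V V = (\<Sum>i<m. y $ i * B (ebasis (i + 1)) V)"
    unfolding V_def by (rule coord_linear_sum[OF lin1 finite_lessThan])
  moreover have "B (ebasis (i + 1)) V = 0" if "i < m" for i
    using functional_mat_mult_vec[where L = "\<lambda>i. B (ebasis (i + 1))", OF lin2 that y] ker that
    unfolding V_def by simp
  ultimately show False by simp
qed

section \<open>The four invariant forms on the orbits\<close>

definition Xbar_dX :: "nat \<Rightarrow> (nat \<Rightarrow> real) \<Rightarrow> (nat \<Rightarrow> real) \<Rightarrow> complex" where
  "Xbar_dX n q v = (\<Sum>a\<in>{1..<n}. cnj (cX n q a) * cX n v a)"

definition theta :: "nat \<Rightarrow> real \<Rightarrow> (nat \<Rightarrow> real) \<Rightarrow> (nat \<Rightarrow> real) \<Rightarrow> real" where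
  "theta n c q v = cphi n v
     - 4 * Im (cnj (cW n q 0) * cW n v 0 - (\<Sum>a\<in>{1..<n}. cnj (cW n q a) * cW n v a))
     + 2 * c / (1 - normX2 n q) * Im (Xbar_dX n q v)"

definition ell :: "nat \<Rightarrow> (nat \<Rightarrow> real) \<Rightarrow> (nat \<Rightarrow> real) \<Rightarrow> complex" where
  "ell n q v = cW n v 0 + (\<Sum>a\<in>{1..<n}. cX n q a * cW n v a)"

definition ball_form :: "nat \<Rightarrow> (nat \<Rightarrow> real) \<Rightarrow> (nat \<Rightarrow> real) \<Rightarrow> (nat \<Rightarrow> real) \<Rightarrow> real" where
  "ball_form n q v w = 1 / (1 - normX2 n q) * ((\<Sum>a\<in>{1..<n}. Re (cX n v a * cnj (cX n w a)))
      + 1 / (1 - normX2 n q) * Re (Xbar_dX n q v * cnj (Xbar_dX n q w)))"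

definition w_form :: "nat \<Rightarrow> (nat \<Rightarrow> real) \<Rightarrow> (nat \<Rightarrow> real) \<Rightarrow> real" where
  "w_form n v w = Re (cW n v 0 * cnj (cW n w 0)) - (\<Sum>a\<in>{1..<n}. Re (cW n v a * cnj (cW n w a)))"

definition ell_form :: "nat \<Rightarrow> (nat \<Rightarrow> real) \<Rightarrow> (nat \<Rightarrow> real) \<Rightarrow> (nat \<Rightarrow> real) \<Rightarrow> real" where
  "ell_form n q v w = 4 / (1 - normX2 n q) * Re (ell n q v * cnj (ell n q w))"

definition orbit_form ::
    "nat \<Rightarrow> real \<Rightarrow> (nat \<Rightarrow> real) \<Rightarrow> real \<Rightarrow> real \<Rightarrow> real \<Rightarrow> real \<Rightarrow> (nat \<Rightarrow> real) \<Rightarrow> (nat \<Rightarrow> real) \<Rightarrow> real"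
  where
  "orbit_form n c q k1 k2 k3 k4 v w = k1 * ball_form n q v w + k2 * (theta n c q v * theta n c q w)
     + k3 * w_form n v w + k4 * ell_form n q v w"

lemma cX_lincomb: "cX n (\<lambda>k. s * x k + t * y k) a = s * cX n x a + t * cX n y a"
  by (simp add: cX_def complex_eq_iff)

lemma cW_lincomb: "cW n (\<lambda>k. s * x k + t * y k) a = s * cW n x a + t * cW n y a"
  by (simp add: cW_def complex_eq_iff)

lemma Xbar_dX_lincomb: "Xbar_dX n q (\<lambda>k. s * x k + t * y k) = s * Xbar_dX n q x + t * Xbar_dX n q y"
  by (simp add: Xbar_dX_def cX_lincomb sum.distrib sum_distrib_left algebra_simps)

lemma ell_lincomb: "ell n q (\<lambda>k. s * x k + t * y k) = s * ell n q x + t * ell n q y"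
  by (simp add: ell_def cW_lincomb sum.distrib sum_distrib_left algebra_simps)

lemma theta_lincomb: "theta n c q (\<lambda>k. s * x k + t * y k) = s * theta n c q x + t * theta n c q y"
  by (simp add: theta_def cphi_def cW_lincomb Xbar_dX_lincomb sum.distrib sum_distrib_left algebra_simps
      flip: sum_subtractf)

lemma orbit_form_lincomb:
  "orbit_form n c q k1 k2 k3 k4 (\<lambda>k. s * x k + t * y k) w
     = s * orbit_form n c q k1 k2 k3 k4 x w + t * orbit_form n c q k1 k2 k3 k4 y w"
  by (simp add: orbit_form_def ball_form_def w_form_def ell_form_def cX_lincomb cW_lincomb
      Xbar_dX_lincomb ell_lincomb theta_lincomb sum.distrib sum_distrib_left algebra_simps)

lemma orbit_form_sym: "orbit_form n c q k1 k2 k3 k4 v w = orbit_form n c q k1 k2 k3 k4 w v"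
  by (simp add: orbit_form_def ball_form_def w_form_def ell_form_def algebra_simps)

lemma orbit_form_add:
  "orbit_form n c q k1 k2 k3 k4 (\<lambda>k. x k + y k) w = orbit_form n c q k1 k2 k3 k4 x w + orbit_form n c q k1 k2 k3 k4 y w"
  "orbit_form n c q k1 k2 k3 k4 w (\<lambda>k. x k + y k) = orbit_form n c q k1 k2 k3 k4 w x + orbit_form n c q k1 k2 k3 k4 w y"
  using orbit_form_lincomb[where s = 1 and t = 1] orbit_form_sym by simp_all

lemma orbit_form_scale_coeffs:
  "a * orbit_form n c q k1 k2 k3 k4 v w = orbit_form n c q (a * k1) (a * k2) (a * k3) (a * k4) v w"
  by (simp add: orbit_form_def algebra_simps)

lemma coord_linear_orbit_form:
  "coord_linear (\<lambda>v. orbit_form n c q k1 k2 k3 k4 v w)"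
  "coord_linear (\<lambda>w. orbit_form n c q k1 k2 k3 k4 v w)"
  unfolding coord_linear_def by (simp_all add: orbit_form_lincomb orbit_form_sym[of n c q k1 k2 k3 k4 v])

lemma orbit_form_ebasis0:
  assumes "n \<ge> 1"
  shows "orbit_form n c q k1 k2 k3 k4 v (ebasis 0) = 0"
proof -
  have "cX n (ebasis 0) a = 0" if "a \<ge> 1" for a
    using that by (simp add: cX_def ebasis_def complex_eq_iff)
  moreover have "cW n (ebasis 0) a = 0" for a
    using assms by (simp add: cW_def ebasis_def complex_eq_iff)
  moreover have "cphi n (ebasis 0) = 0"
    using assms by (simp add: cphi_def ebasis_def)
  ultimately show ?thesis
    by (simp add: orbit_form_def ball_form_def w_form_def ell_form_def theta_def ell_def Xbar_dX_def)
qed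

lemma orbit_form_upd_rho:
  assumes "n \<ge> 1"
  shows "orbit_form n c (q(0 := t)) = orbit_form n c q"
proof -
  have X: "cX n (q(0 := t)) a = cX n q a" if "a \<ge> 1" for a
    using that by (simp add: cX_def)
  have "normX2 n (q(0 := t)) = normX2 n q" "Xbar_dX n (q(0 := t)) = Xbar_dX n q" "ell n (q(0 := t)) = ell n q"
    by (auto simp: normX2_def Xbar_dX_def ell_def X intro!: sum.cong ext)
  moreover have "cW n (q(0 := t)) a = cW n q a" for a
    using assms by (simp add: cW_def)
  ultimately show ?thesis
    by (auto simp: orbit_form_def ball_form_def ell_form_def theta_def intro!: ext)
qed

lemma sum_cX_mult_cnj: "(\<Sum>a\<in>{1..<n}. cX n p a * cnj (cX n p a)) = complex_of_real (normX2 n p)"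
  unfolding normX2_def of_real_sum complex_norm_square ..

lemma ball_form_eq_zero: "(\<And>a. a \<in> {1..<n} \<Longrightarrow> cX n w a = 0) \<Longrightarrow> ball_form n q v w = 0"
  by (simp add: ball_form_def Xbar_dX_def)

section \<open>The metric and the second fundamental form\<close>

definition metric_form :: "nat \<Rightarrow> real \<Rightarrow> (nat \<Rightarrow> real) \<Rightarrow> (nat \<Rightarrow> real) \<Rightarrow> (nat \<Rightarrow> real) \<Rightarrow> real" where
  "metric_form n c q = orbit_form n c q ((q 0 + c) / q 0) (1 / (4 * (q 0)\<^sup>2) * ((q 0 + c) / (q 0 + 2*c)))
     (- 2 / q 0) ((q 0 + c) / (q 0)\<^sup>2)"

lemma metric_form_sym: "metric_form n c q v w = metric_form n c q w v"
  unfolding metric_form_def by (rule orbit_form_sym)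

lemma coord_linear_metric_form:
  "coord_linear (\<lambda>v. metric_form n c q v w)" "coord_linear (\<lambda>w. metric_form n c q v w)"
  unfolding metric_form_def by (rule coord_linear_orbit_form)+

lemma grho_quad_eq_metric_form: "grho_quad n c q v = metric_form n c q v v"
proof -
  have sq: "(cmod z)\<^sup>2 = Re (z * cnj z)" for z
    unfolding cmod_power2 by (simp add: power2_eq_square)
  show ?thesis
    unfolding grho_quad_def Let_def metric_form_def orbit_form_def ball_form_def w_form_def
      ell_form_def theta_def ell_def Xbar_dX_def sq
    by (simp add: power2_eq_square sum_subtractf algebra_simps)
qed

lemma gN_eq_metric_form:
  "gN n c q i j = fcoef c (q 0) * ebasis i 0 * ebasis j 0 + metric_form n c q (ebasis i) (ebasis j)"
  by (simp add: gN_def gN_quad_def grho_quad_eq_metric_form metric_form_def orbit_form_add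
      orbit_form_sym[where v = "ebasis j" and w = "ebasis i"] power2_eq_square algebra_simps)

lemma gN_tangent: "i \<ge> 1 \<Longrightarrow> j \<ge> 1 \<Longrightarrow> gN n c q i j = metric_form n c q (ebasis i) (ebasis j)"
  by (simp add: gN_eq_metric_form ebasis_def)

lemma gN_normal: "n \<ge> 1 \<Longrightarrow> j \<ge> 1 \<Longrightarrow> gN n c q j 0 = 0"
  by (simp add: gN_eq_metric_form metric_form_def orbit_form_ebasis0) (simp add: ebasis_def)

lemma metric_coeff_derivs:
  fixes \<rho> c :: real
  assumes "\<rho> > 0" "c \<ge> 0"
  shows "((\<lambda>t. (t + c) / t) has_real_derivative - (c / \<rho>\<^sup>2)) (at \<rho>)"
    and "((\<lambda>t. 1 / (4 * t\<^sup>2) * ((t + c) / (t + 2*c))) has_real_derivative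
           - ((2*\<rho>\<^sup>2 + 5*c*\<rho> + 4*c\<^sup>2) / (4*\<rho>^3*(\<rho> + 2*c)\<^sup>2))) (at \<rho>)"
    and "((\<lambda>t. - 2 / t) has_real_derivative 2 / \<rho>\<^sup>2) (at \<rho>)"
    and "((\<lambda>t. (t + c) / t\<^sup>2) has_real_derivative - ((\<rho> + 2*c) / \<rho>^3)) (at \<rho>)"
proof -
  have nz: "\<rho> \<noteq> 0" "\<rho> + 2*c \<noteq> 0" using assms by auto
  show "((\<lambda>t. (t + c) / t) has_real_derivative - (c / \<rho>\<^sup>2)) (at \<rho>)"
    "((\<lambda>t. - 2 / t) has_real_derivative 2 / \<rho>\<^sup>2) (at \<rho>)"
    "((\<lambda>t. (t + c) / t\<^sup>2) has_real_derivative - ((\<rho> + 2*c) / \<rho>^3)) (at \<rho>)"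
    using nz by (auto intro!: derivative_eq_intros simp: field_simps power2_eq_square power3_eq_cube)
  show "((\<lambda>t. 1 / (4 * t\<^sup>2) * ((t + c) / (t + 2*c))) has_real_derivative
           - ((2*\<rho>\<^sup>2 + 5*c*\<rho> + 4*c\<^sup>2) / (4*\<rho>^3*(\<rho> + 2*c)\<^sup>2))) (at \<rho>)"
  proof -
    have "((\<lambda>t. (t + c) / (4 * t\<^sup>2 * (t + 2*c))) has_real_derivative
        (1 * (4 * \<rho>\<^sup>2 * (\<rho> + 2*c)) - (\<rho> + c) * (8 * \<rho> * (\<rho> + 2*c) + 4 * \<rho>\<^sup>2))
          / ((4 * \<rho>\<^sup>2 * (\<rho> + 2*c)) * (4 * \<rho>\<^sup>2 * (\<rho> + 2*c)))) (at \<rho>)"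
    proof (rule DERIV_divide)
      show "((\<lambda>t. t + c) has_real_derivative 1) (at \<rho>)"
        by (auto intro!: derivative_eq_intros)
      show "((\<lambda>t. 4 * t\<^sup>2 * (t + 2*c)) has_real_derivative 8 * \<rho> * (\<rho> + 2*c) + 4 * \<rho>\<^sup>2) (at \<rho>)"
        by (auto intro!: derivative_eq_intros simp: algebra_simps power2_eq_square)
      show "4 * \<rho>\<^sup>2 * (\<rho> + 2*c) \<noteq> 0"
        using nz by simp
    qed
    moreover have "(1 * (4 * \<rho>\<^sup>2 * (\<rho> + 2*c)) - (\<rho> + c) * (8 * \<rho> * (\<rho> + 2*c) + 4 * \<rho>\<^sup>2))
          / ((4 * \<rho>\<^sup>2 * (\<rho> + 2*c)) * (4 * \<rho>\<^sup>2 * (\<rho> + 2*c)))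
        = - ((2*\<rho>\<^sup>2 + 5*c*\<rho> + 4*c\<^sup>2) / (4*\<rho>^3*(\<rho> + 2*c)\<^sup>2))"
    proof -
      have "1 * (4 * \<rho>\<^sup>2 * (\<rho> + 2*c)) - (\<rho> + c) * (8 * \<rho> * (\<rho> + 2*c) + 4 * \<rho>\<^sup>2)
          = (4 * \<rho>) * (- (2*\<rho>\<^sup>2 + 5*c*\<rho> + 4*c\<^sup>2))"
        "(4 * \<rho>\<^sup>2 * (\<rho> + 2*c)) * (4 * \<rho>\<^sup>2 * (\<rho> + 2*c)) = (4 * \<rho>) * (4*\<rho>^3*(\<rho> + 2*c)\<^sup>2)"
        by (simp_all add: algebra_simps power2_eq_square power3_eq_cube)
      then show ?thesis using nz by (simp only: mult_divide_mult_cancel_left)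
    qed
    ultimately show ?thesis by simp
  qed
qed

definition sff_form :: "nat \<Rightarrow> real \<Rightarrow> (nat \<Rightarrow> real) \<Rightarrow> (nat \<Rightarrow> real) \<Rightarrow> (nat \<Rightarrow> real) \<Rightarrow> real" where
  "sff_form n c p v w = sqrt ((p 0 + c) / (p 0 + 2*c)) *
     orbit_form n c p (c / p 0) ((2*(p 0)\<^sup>2 + 5*c*p 0 + 4*c\<^sup>2) / (4*(p 0)\<^sup>2*(p 0 + 2*c)\<^sup>2))
       (- 2 / p 0) ((p 0 + 2*c) / (p 0)\<^sup>2) v w"

lemma sff_form_sym: "sff_form n c p v w = sff_form n c p w v"
  unfolding sff_form_def by (simp add: orbit_form_sym)

lemma coord_linear_sff_form:
  shows "coord_linear (\<lambda>v. sff_form n c p v w)"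
    and "coord_linear (\<lambda>w. sff_form n c p v w)"
proof -
  show lin: "coord_linear (\<lambda>v. sff_form n c p v w)" for w
    unfolding coord_linear_def sff_form_def by (simp add: orbit_form_lincomb algebra_simps)
  show "coord_linear (\<lambda>w. sff_form n c p v w)"
    unfolding sff_form_sym[of n c p v] by (rule lin)
qed

lemma pderiv_coord_eqI:
  "((\<lambda>t. F (p(k := t))) has_field_derivative D) (at (p k)) \<Longrightarrow> pderiv_coord F k p = D"
  unfolding pderiv_coord_def by (rule the_equality) (auto intro: DERIV_unique)

lemma inverse_sqrt_fcoef:
  fixes \<rho> c :: real
  assumes "\<rho> > 0" "c \<ge> 0"
  shows "1 / sqrt (fcoef c \<rho>) = 2 * \<rho> * sqrt ((\<rho> + c) / (\<rho> + 2*c))"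
proof -
  have "fcoef c \<rho> = (1 / (2 * \<rho>))\<^sup>2 * inverse ((\<rho> + c) / (\<rho> + 2*c))"
    by (simp add: fcoef_def power2_eq_square)
  then have "sqrt (fcoef c \<rho>) = sqrt ((1 / (2 * \<rho>))\<^sup>2) * sqrt (inverse ((\<rho> + c) / (\<rho> + 2*c)))"
    by (simp only: real_sqrt_mult)
  then show ?thesis
    using assms by (simp add: real_sqrt_inverse real_sqrt_divide)
qed

lemma sff_eq_sff_form:
  assumes n: "n \<ge> 1" and c: "c \<ge> 0" and \<rho>: "p 0 > 0" and ij: "i \<ge> 1" "j \<ge> 1"
  shows "sff n c p i j = sff_form n c p (ebasis i) (ebasis j)"
proof -
  let ?\<rho> = "p 0"
  define D where "D = orbit_form n c p (- (c / ?\<rho>\<^sup>2))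
    (- ((2*?\<rho>\<^sup>2 + 5*c*?\<rho> + 4*c\<^sup>2) / (4*?\<rho>^3*(?\<rho> + 2*c)\<^sup>2))) (2 / ?\<rho>\<^sup>2) (- ((?\<rho> + 2*c) / ?\<rho>^3))
    (ebasis i) (ebasis j)"
  have "pderiv_coord (\<lambda>q. gN n c q i j) 0 p = D"
  proof (rule pderiv_coord_eqI)
    show "((\<lambda>t. gN n c (p(0 := t)) i j) has_field_derivative D) (at (p 0))"
      unfolding gN_tangent[OF ij] metric_form_def fun_upd_same orbit_form_upd_rho[OF n] D_def
        orbit_form_def
      using metric_coeff_derivs[OF \<rho> c] by (intro DERIV_add DERIV_cmult_right)
  qed
  moreover have "(\<lambda>q. gN n c q j 0) = (\<lambda>q. 0)" "(\<lambda>q. gN n c q i 0) = (\<lambda>q. 0)"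
    using n ij by (auto simp: gN_normal)
  \<comment> \<open>the normal-tangential metric coefficients vanish, so only \<open>-\<partial>\<^sub>\<rho>g\<^sub>i\<^sub>j/2\<close> survives\<close>
  ultimately have christ: "christ1 n c p i j 0 = - D / 2"
    unfolding christ1_def by (simp add: pderiv_coord_eqI[OF DERIV_const])
  have "sff n c p i j = nu c p 0 * christ1 n c p i j 0"
    unfolding sff_def using n by (subst sum.remove[of _ 0]) (auto simp: nu_def)
  also have "\<dots> = sqrt ((?\<rho> + c) / (?\<rho> + 2*c)) * (- ?\<rho> * D)"
    unfolding christ nu_def using inverse_sqrt_fcoef[OF \<rho> c] by simp
  also have "- ?\<rho> * D = orbit_form n c p (c / ?\<rho>) ((2*?\<rho>\<^sup>2 + 5*c*?\<rho> + 4*c\<^sup>2) / (4*?\<rho>\<^sup>2*(?\<rho> + 2*c)\<^sup>2))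
       (- 2 / ?\<rho>) ((?\<rho> + 2*c) / ?\<rho>\<^sup>2) (ebasis i) (ebasis j)"
  proof -
    have "4*?\<rho>^3*(?\<rho> + 2*c)\<^sup>2 = ?\<rho> * (4*?\<rho>\<^sup>2*(?\<rho> + 2*c)\<^sup>2)"
      by (simp add: power2_eq_square power3_eq_cube)
    then have "- ?\<rho> * (- (c / ?\<rho>\<^sup>2)) = c / ?\<rho>" "- ?\<rho> * (2 / ?\<rho>\<^sup>2) = - 2 / ?\<rho>"
      "- ?\<rho> * (- ((2*?\<rho>\<^sup>2 + 5*c*?\<rho> + 4*c\<^sup>2) / (4*?\<rho>^3*(?\<rho> + 2*c)\<^sup>2)))
         = (2*?\<rho>\<^sup>2 + 5*c*?\<rho> + 4*c\<^sup>2) / (4*?\<rho>\<^sup>2*(?\<rho> + 2*c)\<^sup>2)"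
      "- ?\<rho> * (- ((?\<rho> + 2*c) / ?\<rho>^3)) = (?\<rho> + 2*c) / ?\<rho>\<^sup>2"
      using \<rho> by (simp_all add: power2_eq_square power3_eq_cube)
    then show ?thesis
      unfolding D_def orbit_form_scale_coeffs by (simp only:)
  qed
  finally show ?thesis
    unfolding sff_form_def .
qed

section \<open>Positivity\<close>

lemma tangent_coord_cases:
  assumes n: "n \<ge> 1" and i: "i \<in> {1..<4*n}" and vi: "v i \<noteq> 0"
  shows "(\<exists>j<n. cW n v j \<noteq> 0) \<or> (\<exists>a\<in>{1..<n}. cX n v a \<noteq> 0) \<or> cphi n v \<noteq> 0"
proof -
  consider "i \<le> 2*n - 2" | "i = 2*n - 1" | "i \<ge> 2*n" using i by linarith
  then show ?thesis
  proof cases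
    case 1
    define a where "a = (i + 1) div 2"
    have a: "a \<in> {1..<n}" "i = 2*a - 1 \<or> i = 2*a" using 1 i by (auto simp: a_def)
    then have "cX n v a \<noteq> 0" using vi by (auto simp: cX_def complex_eq_iff)
    then show ?thesis using a by blast
  next
    case 2
    then show ?thesis using vi by (simp add: cphi_def)
  next
    case 3
    define j where "j = (i - 2*n) div 2"
    have j: "j < n" "i = 2*n + 2*j \<or> i = 2*n + 2*j + 1" using 3 i by (auto simp: j_def)
    then have "cW n v j \<noteq> 0" using vi by (auto simp: cW_def complex_eq_iff)
    then show ?thesis using j by blast
  qed
qed

lemma orbit_form_pos:
  assumes n: "n \<ge> 1" and N: "normX2 n q < 1"
    and k: "k1 > 0" "k2 > 0" "k3 < 0" "- k3 \<le> 2 * k4"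
    and v: "\<exists>i\<in>{1..<4*n}. v i \<noteq> 0"
  shows "orbit_form n c q k1 k2 k3 k4 v v > 0"
proof -
  have sq: "Re (z * cnj z) = (cmod z)\<^sup>2" for z
    unfolding cmod_power2 by (simp add: power2_eq_square)
  have N': "1 - normX2 n q > 0" using N by simp
  define X2 where "X2 = (\<Sum>a\<in>{1..<n}. (cmod (cX n v a))\<^sup>2)"
  define H where "H = (\<Sum>a\<in>{1..<n}. (cmod (cW n v a))\<^sup>2) - (cmod (cW n v 0))\<^sup>2
    + 4 * k4 / - k3 / (1 - normX2 n q) * (cmod (ell n q v))\<^sup>2"
  have "X2 / (1 - normX2 n q) \<le> ball_form n q v v"
    using N' unfolding ball_form_def X2_def sq by (simp add: divide_right_mono)
  then have A: "k1 * (X2 / (1 - normX2 n q)) \<le> k1 * ball_form n q v v"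
    using k by (intro mult_left_mono) simp_all
  have X2: "X2 \<ge> 0" unfolding X2_def by (simp add: sum_nonneg)
  have BC: "k3 * w_form n v v + k4 * ell_form n q v v = - k3 * H"
    using k N' unfolding H_def w_form_def ell_form_def sq by (simp add: field_simps)
  note hyp = hyperbolic_form_pos[OF finite_atLeastLessThan normX2_def N,
      where \<kappa> = "4 * k4 / - k3" and V = "cW n v 0" and W = "cW n v"]
  have "4 * k4 / - k3 \<ge> 2" using k by (simp add: field_simps)
  then have H: "H \<ge> 0" "cW n v 0 \<noteq> 0 \<or> (\<exists>a\<in>{1..<n}. cW n v a \<noteq> 0) \<Longrightarrow> H > 0"
    using hyp unfolding H_def ell_def by simp_all
  have "0 \<le> k1 * (X2 / (1 - normX2 n q))" using k X2 N' by simp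
  then have A0: "k1 * ball_form n q v v \<ge> 0" using A by linarith
  have T0: "k2 * (theta n c q v)\<^sup>2 \<ge> 0" using k by simp
  have H0: "- k3 * H \<ge> 0" using k H(1) by (simp add: mult_nonpos_nonneg)
  from v obtain i where "i \<in> {1..<4*n}" "v i \<noteq> 0" by blast
  then have "(\<exists>j<n. cW n v j \<noteq> 0) \<or> (\<exists>a\<in>{1..<n}. cX n v a \<noteq> 0) \<or> cphi n v \<noteq> 0"
    by (rule tangent_coord_cases[OF n])
  then consider (W) j where "j < n" "cW n v j \<noteq> 0" | (X) a where "a \<in> {1..<n}" "cX n v a \<noteq> 0"
    | (phi) "\<forall>j<n. cW n v j = 0" "\<forall>a\<in>{1..<n}. cX n v a = 0" "cphi n v \<noteq> 0"
    by blast
  then have "k1 * ball_form n q v v + k2 * (theta n c q v)\<^sup>2 + - k3 * H > 0"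
  proof cases
    case (W j)
    then have "cW n v 0 \<noteq> 0 \<or> (\<exists>a\<in>{1..<n}. cW n v a \<noteq> 0)"
      by (cases "j = 0") auto
    then have "- k3 * H > 0" using H(2) k by (simp add: mult_neg_pos)
    then show ?thesis using A0 T0 by linarith
  next
    case (X a)
    then have "X2 > 0" unfolding X2_def by (intro sum_pos2[OF _ X(1)]) simp_all
    then have "k1 * ball_form n q v v > 0" using A N' k by (smt (verit) divide_pos_pos mult_pos_pos)
    then show ?thesis using T0 H0 by linarith
  next
    case phi
    then have "theta n c q v = cphi n v" using n by (simp add: theta_def Xbar_dX_def)
    then have "k2 * (theta n c q v)\<^sup>2 > 0" using phi(3) k by simp
    then show ?thesis using A0 H0 by linarith
  qed
  moreover have "orbit_form n c q k1 k2 k3 k4 v v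
      = k1 * ball_form n q v v + k2 * (theta n c q v)\<^sup>2 + - k3 * H"
    unfolding orbit_form_def using BC by (simp add: power2_eq_square)
  ultimately show ?thesis by simp
qed

lemma metric_form_pos:
  assumes "n \<ge> 1" "c \<ge> 0" "p 0 > 0" "normX2 n p < 1" "\<exists>i\<in>{1..<4*n}. v i \<noteq> 0"
  shows "metric_form n c p v v > 0"
proof -
  have "1 / (4 * (p 0)\<^sup>2) * ((p 0 + c) / (p 0 + 2*c)) > 0"
    using assms by (intro mult_pos_pos divide_pos_pos) simp_all
  then show ?thesis
    unfolding metric_form_def using assms
    by (intro orbit_form_pos) (simp_all add: field_simps power2_eq_square)
qed

lemma sff_form_pos:
  assumes "n \<ge> 1" "c > 0" "p 0 > 0" "normX2 n p < 1" "\<exists>i\<in>{1..<4*n}. v i \<noteq> 0"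
  shows "sff_form n c p v v > 0"
proof -
  have "(2*(p 0)\<^sup>2 + 5*c*p 0 + 4*c\<^sup>2) / (4*(p 0)\<^sup>2*(p 0 + 2*c)\<^sup>2) > 0"
    using assms by (intro divide_pos_pos add_pos_pos mult_pos_pos) simp_all
  then have "orbit_form n c p (c / p 0) ((2*(p 0)\<^sup>2 + 5*c*p 0 + 4*c\<^sup>2) / (4*(p 0)\<^sup>2*(p 0 + 2*c)\<^sup>2))
       (- 2 / p 0) ((p 0 + 2*c) / (p 0)\<^sup>2) v v > 0"
    using assms by (intro orbit_form_pos) (simp_all add: field_simps power2_eq_square)
  then show ?thesis
    unfolding sff_form_def using assms by simp
qed

lemma sff_double_sum_pos:
  assumes n: "n \<ge> 1" and c: "c > 0" and \<rho>: "p 0 > 0" and N: "normX2 n p < 1"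
    and v: "\<exists>i\<in>{1..<4*n}. v i \<noteq> 0"
  shows "(\<Sum>i\<in>{1..<4*n}. \<Sum>j\<in>{1..<4*n}. v i * v j * sff n c p i j) > 0"
proof -
  define V where "V = (\<lambda>k. \<Sum>i\<in>{1..<4*n}. v i * ebasis i k)"
  have "V k = v k" if "k \<in> {1..<4*n}" for k
  proof -
    have "V k = (\<Sum>i\<in>{1..<4*n}. if i = k then v k else 0)"
      unfolding V_def by (intro sum.cong) (auto simp: ebasis_def)
    then show ?thesis using that by simp
  qed
  then have pos: "sff_form n c p V V > 0"
    using v by (intro sff_form_pos[OF n c \<rho> N]) auto
  have "(\<Sum>i\<in>{1..<4*n}. \<Sum>j\<in>{1..<4*n}. v i * v j * sff n c p i j)
      = (\<Sum>i\<in>{1..<4*n}. \<Sum>j\<in>{1..<4*n}. v i * v j * sff_form n c p (ebasis i) (ebasis j))"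
    using c by (intro sum.cong refl) (simp add: sff_eq_sff_form[of n c p, OF n _ \<rho>])
  also have "\<dots> = sff_form n c p V V"
    unfolding V_def by (rule bilinear_double_sum[OF coord_linear_sff_form finite_atLeastLessThan])
  finally show ?thesis using pos by simp
qed

section \<open>An eigenbasis of the shape operator\<close>

text \<open>Since \<open>\<theta>(\<partial>\<^sub>\<phi>) = 1\<close>, correcting the \<open>\<phi>\<close>-component projects onto the kernel of \<open>\<theta>\<close>.\<close>

definition theta_proj :: "nat \<Rightarrow> real \<Rightarrow> (nat \<Rightarrow> real) \<Rightarrow> (nat \<Rightarrow> real) \<Rightarrow> nat \<Rightarrow> real" where
  "theta_proj n c p v = v(2*n - 1 := v (2*n - 1) - theta n c p v)"

definition w_vec :: "nat \<Rightarrow> (nat \<Rightarrow> complex) \<Rightarrow> nat \<Rightarrow> real" where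
  "w_vec n \<omega> = (\<lambda>k. if 2*n \<le> k \<and> k < 4*n then
       (if even k then Re (\<omega> ((k - 2*n) div 2)) else Im (\<omega> ((k - 2*n) div 2))) else 0)"

definition w_frame :: "nat \<Rightarrow> (nat \<Rightarrow> real) \<Rightarrow> nat \<Rightarrow> nat \<Rightarrow> complex" where
  "w_frame n p b j =
     (if b = 0 then (if j = 0 then 1 else - cnj (cX n p j))
      else if j = 0 then - cX n p b else if j = b then 1 else 0)"

text \<open>
  The eigenbasis, indexed like the coordinates: for \<open>k \<le> 2n - 2\<close> the horizontal lifts of the
  \<open>X\<close>-coordinate fields, for \<open>k = 2n - 1\<close> the field \<open>\<partial>\<^sub>\<phi>\<close>, and for \<open>k \<ge> 2n\<close> the horizontal lifts
  of the \<open>w\<close>-vectors \<open>f\<^sub>b\<close> and \<open>i f\<^sub>b\<close>, \<open>b = (k - 2n) div 2\<close>, where \<open>f\<^sub>0 = (1, - cnj X)\<close> and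
  \<open>f\<^sub>1, \<dots>, f\<^sub>n\<^sub>-\<^sub>1\<close> span the kernel of \<open>dw\<^sup>0 + \<Sum>X\<^sup>a dw\<^sup>a\<close> (\<^const>\<open>w_frame\<close>).
\<close>

definition eigvec :: "nat \<Rightarrow> real \<Rightarrow> (nat \<Rightarrow> real) \<Rightarrow> nat \<Rightarrow> nat \<Rightarrow> real" where
  "eigvec n c p k =
     (if k \<le> 2*n - 2 then theta_proj n c p (ebasis k)
      else if k = 2*n - 1 then ebasis k
      else theta_proj n c p (w_vec n (\<lambda>j. (if even k then 1 else \<i>) * w_frame n p ((k - 2*n) div 2) j)))"

lemma theta_proj_coords:
  assumes "n \<ge> 1"
  shows "a \<in> {1..<n} \<Longrightarrow> cX n (theta_proj n c p v) a = cX n v a"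
    and "cW n (theta_proj n c p v) j = cW n v j"
    and "theta n c p (theta_proj n c p v) = 0"
proof -
  have X: "cX n (theta_proj n c p v) a = cX n v a" if "a \<in> {1..<n}" for a
    using that by (auto simp: theta_proj_def cX_def)
  then show "a \<in> {1..<n} \<Longrightarrow> cX n (theta_proj n c p v) a = cX n v a" .
  show W: "cW n (theta_proj n c p v) j = cW n v j" for j
    using assms by (simp add: theta_proj_def cW_def) arith
  have "Xbar_dX n p (theta_proj n c p v) = Xbar_dX n p v"
    unfolding Xbar_dX_def by (intro sum.cong refl) (simp add: X)
  then show "theta n c p (theta_proj n c p v) = 0"
    by (simp add: theta_def W) (simp add: theta_proj_def cphi_def theta_def)
qed

lemma w_vec_coords:
  shows "j < n \<Longrightarrow> cW n (w_vec n \<omega>) j = \<omega> j"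
    and "a \<in> {1..<n} \<Longrightarrow> cX n (w_vec n \<omega>) a = 0"
  by (auto simp: cW_def cX_def w_vec_def complex_eq_iff)

lemma eigvec_horizontal:
  assumes "n \<ge> 1" "1 \<le> k" "k \<le> 2*n - 2"
  shows "eigvec n c p k = theta_proj n c p (ebasis k)"
    and "cW n (eigvec n c p k) j = 0"
    and "theta n c p (eigvec n c p k) = 0"
proof -
  show e: "eigvec n c p k = theta_proj n c p (ebasis k)"
    using assms by (simp add: eigvec_def)
  show "cW n (eigvec n c p k) j = 0"
    unfolding e theta_proj_coords(2)[OF assms(1)] using assms
    by (auto simp: cW_def ebasis_def complex_eq_iff)
  show "theta n c p (eigvec n c p k) = 0"
    unfolding e using assms(1) by (rule theta_proj_coords(3))
qed

lemma eigvec_phi: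
  assumes "n \<ge> 1" "k = 2*n - 1"
  shows "a \<in> {1..<n} \<Longrightarrow> cX n (eigvec n c p k) a = 0"
    and "cW n (eigvec n c p k) j = 0"
    and "theta n c p (eigvec n c p k) = 1"
proof -
  have "\<not> k \<le> 2*n - 2" using assms by arith
  then have e: "eigvec n c p k = ebasis k"
    using assms(2) by (simp add: eigvec_def)
  have X: "cX n (eigvec n c p k) a = 0" if "a \<in> {1..<n}" for a
    unfolding e using that assms(2) by (auto simp: cX_def ebasis_def complex_eq_iff)
  then show "a \<in> {1..<n} \<Longrightarrow> cX n (eigvec n c p k) a = 0" .
  show W: "cW n (eigvec n c p k) j = 0" for j
    unfolding e using assms by (auto simp: cW_def ebasis_def complex_eq_iff)
  have "Xbar_dX n p (eigvec n c p k) = 0"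
    unfolding Xbar_dX_def by (rule sum.neutral) (simp add: X)
  moreover have "cphi n (eigvec n c p k) = 1"
    unfolding e cphi_def ebasis_def using assms(2) by simp
  ultimately show "theta n c p (eigvec n c p k) = 1"
    by (simp add: theta_def W)
qed

lemma eigvec_vertical:
  assumes "n \<ge> 1" "2*n \<le> k"
  shows "a \<in> {1..<n} \<Longrightarrow> cX n (eigvec n c p k) a = 0"
    and "theta n c p (eigvec n c p k) = 0"
    and "j < n \<Longrightarrow> cW n (eigvec n c p k) j = (if even k then 1 else \<i>) * w_frame n p ((k - 2*n) div 2) j"
proof -
  have "\<not> k \<le> 2*n - 2" "k \<noteq> 2*n - 1" using assms by auto
  then have e: "eigvec n c p k
      = theta_proj n c p (w_vec n (\<lambda>j. (if even k then 1 else \<i>) * w_frame n p ((k - 2*n) div 2) j))"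
    unfolding eigvec_def by presburger
  show "a \<in> {1..<n} \<Longrightarrow> cX n (eigvec n c p k) a = 0"
    "theta n c p (eigvec n c p k) = 0"
    "j < n \<Longrightarrow> cW n (eigvec n c p k) j = (if even k then 1 else \<i>) * w_frame n p ((k - 2*n) div 2) j"
    unfolding e using assms by (simp_all add: theta_proj_coords w_vec_coords)
qed

lemma eigvec_support:
  assumes "t < 4*n - 1" "k = 0 \<or> 4*n - 1 < k"
  shows "eigvec n c p (t + 1) k = 0"
  using assms by (auto simp: eigvec_def theta_proj_def ebasis_def w_vec_def)

lemma ell_w_frame:
  assumes "n \<ge> 1" "b < n" "\<forall>j<n. cW n v j = \<mu> * w_frame n p b j"
  shows "ell n p v = (if b = 0 then \<mu> * (1 - normX2 n p) else 0)"
proof (cases "b = 0")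
  case True
  have "(\<Sum>a\<in>{1..<n}. cX n p a * cW n v a) = (\<Sum>a\<in>{1..<n}. - \<mu> * (cX n p a * cnj (cX n p a)))"
    using assms True by (intro sum.cong refl) (simp add: w_frame_def)
  then have "ell n p v = \<mu> - \<mu> * (\<Sum>a\<in>{1..<n}. cX n p a * cnj (cX n p a))"
    using assms True by (simp add: ell_def w_frame_def sum_distrib_left sum_negf)
  also have "\<dots> = \<mu> * (1 - normX2 n p)"
    unfolding sum_cX_mult_cnj by (simp add: algebra_simps)
  finally show ?thesis using True by simp
next
  case False
  have "(\<Sum>a\<in>{1..<n}. cX n p a * cW n v a) = (\<Sum>a\<in>{1..<n}. if a = b then \<mu> * cX n p b else 0)"
    using assms False by (intro sum.cong refl) (auto simp: w_frame_def)
  then show ?thesis using assms False by (simp add: ell_def w_frame_def)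
qed

lemma w_form_ell_form_w_frame0:
  assumes n: "n \<ge> 1" and N: "normX2 n p < 1" and W: "\<forall>j<n. cW n v j = \<mu> * w_frame n p 0 j"
  shows "w_form n x v = Re (ell n p x * cnj \<mu>)"
    and "ell_form n p x v = 4 * Re (ell n p x * cnj \<mu>)"
proof -
  have "(\<Sum>a\<in>{1..<n}. Re (cW n x a * cnj (cW n v a))) = - (\<Sum>a\<in>{1..<n}. Re (cX n p a * cW n x a * cnj \<mu>))"
    unfolding sum_negf[symmetric] using W by (intro sum.cong refl) (simp add: w_frame_def algebra_simps)
  then show "w_form n x v = Re (ell n p x * cnj \<mu>)"
    using W n by (simp add: w_form_def ell_def w_frame_def distrib_right sum_distrib_right)
  have "ell n p v = \<mu> * (1 - normX2 n p)"
    using ell_w_frame[of n 0 v \<mu> p] n W by simp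
  then show "ell_form n p x v = 4 * Re (ell n p x * cnj \<mu>)"
    using N by (simp add: ell_form_def) (simp add: field_simps)
qed

lemma orbit_form_w_frame:
  assumes n: "n \<ge> 1" and N: "normX2 n p < 1" and b: "b < n"
    and X: "\<And>a. a \<in> {1..<n} \<Longrightarrow> cX n v a = 0" and T: "theta n c p v = 0"
    and W: "\<forall>j<n. cW n v j = \<mu> * w_frame n p b j"
  obtains L where
    "\<And>k1 k2 k3 k4. orbit_form n c p k1 k2 k3 k4 x v = (if b = 0 then k3 + 4 * k4 else k3) * L"
proof -
  have base: "orbit_form n c p k1 k2 k3 k4 x v = k3 * w_form n x v + k4 * ell_form n p x v"
    for k1 k2 k3 k4
    using ball_form_eq_zero[OF X] T by (simp add: orbit_form_def)
  show thesis
  proof (cases "b = 0")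
    case True
    then have "w_form n x v = Re (ell n p x * cnj \<mu>)" "ell_form n p x v = 4 * Re (ell n p x * cnj \<mu>)"
      using w_form_ell_form_w_frame0[OF n N] W by auto
    with True show thesis
      by (intro that[of "Re (ell n p x * cnj \<mu>)"]) (simp add: base algebra_simps)
  next
    case False
    then have "ell n p v = 0" using ell_w_frame[OF n b W] by simp
    with False show thesis
      by (intro that[of "w_form n x v"]) (simp add: base ell_form_def)
  qed
qed

text \<open>The only combination of the coefficients of \<^const>\<open>orbit_form\<close> seen by the \<open>k\<close>-th eigenvector.\<close>

definition eigen_weight :: "nat \<Rightarrow> nat \<Rightarrow> real \<Rightarrow> real \<Rightarrow> real \<Rightarrow> real \<Rightarrow> real" where
  "eigen_weight n k k1 k2 k3 k4 =
     (if k \<le> 2*n - 2 then k1 else if k = 2*n - 1 then k2 else if k \<le> 2*n + 1 then k3 + 4 * k4 else k3)"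

lemma orbit_form_eigvec:
  assumes n: "n \<ge> 1" and N: "normX2 n p < 1" and k: "1 \<le> k" "k \<le> 4*n - 1"
  obtains L where
    "\<And>k1 k2 k3 k4. orbit_form n c p k1 k2 k3 k4 x (eigvec n c p k) = eigen_weight n k k1 k2 k3 k4 * L"
proof -
  let ?E = "eigvec n c p k"
  consider (horizontal) "k \<le> 2*n - 2" | (phi) "k = 2*n - 1" | (vertical) "2*n \<le> k" by linarith
  then show thesis
  proof cases
    case horizontal
    have "ell n p ?E = 0" by (simp add: ell_def eigvec_horizontal(2,3)[OF n k(1) horizontal])
    then show thesis
      by (intro that[of "ball_form n p x ?E"])
        (simp add: orbit_form_def w_form_def ell_form_def eigen_weight_def horizontal
          eigvec_horizontal(2,3)[OF n k(1) horizontal])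
  next
    case phi
    have "ell n p ?E = 0" by (simp add: ell_def eigvec_phi[OF n phi])
    moreover have "ball_form n p x ?E = 0"
      by (rule ball_form_eq_zero) (rule eigvec_phi(1)[OF n phi])
    moreover have "eigen_weight n k k1 k2 k3 k4 = k2" for k1 k2 k3 k4
      using phi n by (auto simp: eigen_weight_def)
    ultimately show thesis
      by (intro that[of "theta n c p x"])
        (simp add: orbit_form_def w_form_def ell_form_def eigvec_phi[OF n phi])
  next
    case vertical
    define b where "b = (k - 2*n) div 2"
    have b: "b < n" using k vertical by (auto simp: b_def)
    have "\<forall>j<n. cW n ?E j = (if even k then 1 else \<i>) * w_frame n p b j"
      using eigvec_vertical(3)[OF n vertical] by (simp add: b_def)
    then obtain L where L: "\<And>k1 k2 k3 k4.
        orbit_form n c p k1 k2 k3 k4 x ?E = (if b = 0 then k3 + 4 * k4 else k3) * L"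
      using orbit_form_w_frame[OF n N b] eigvec_vertical(1,2)[OF n vertical] by blast
    have "eigen_weight n k k1 k2 k3 k4 = (if b = 0 then k3 + 4 * k4 else k3)" for k1 k2 k3 k4
      using vertical k by (auto simp: eigen_weight_def b_def)
    with L show thesis
      by (intro that[of L]) simp
  qed
qed

definition shape_spectrum :: "nat \<Rightarrow> real \<Rightarrow> real \<Rightarrow> real list" where
  "shape_spectrum n c \<rho> = (let s = sqrt ((\<rho> + c) / (\<rho> + 2*c)) in
     replicate (2*n - 2) (c / (\<rho> + c) * s)
     @ [(2*\<rho>\<^sup>2 + 5*c*\<rho> + 4*c\<^sup>2) / ((\<rho> + 2*c) * (\<rho> + c)) * s]
     @ replicate 2 ((\<rho> + 4*c) / (\<rho> + 2*c) * s)
     @ replicate (2*n - 2) s)"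

lemma length_shape_spectrum: "n \<ge> 1 \<Longrightarrow> length (shape_spectrum n c \<rho>) = 4*n - 1"
  by (simp add: shape_spectrum_def Let_def)

lemma shape_spectrum_nth:
  fixes c \<rho> :: real
  defines "s \<equiv> sqrt ((\<rho> + c) / (\<rho> + 2*c))"
  assumes n: "n \<ge> 1"
  shows "i < 2*n - 2 \<Longrightarrow> shape_spectrum n c \<rho> ! i = c / (\<rho> + c) * s"
    and "shape_spectrum n c \<rho> ! (2*n - 2) = (2*\<rho>\<^sup>2 + 5*c*\<rho> + 4*c\<^sup>2) / ((\<rho> + 2*c) * (\<rho> + c)) * s"
    and "2*n - 1 \<le> i \<Longrightarrow> i \<le> 2*n \<Longrightarrow> shape_spectrum n c \<rho> ! i = (\<rho> + 4*c) / (\<rho> + 2*c) * s"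
    and "2*n + 1 \<le> i \<Longrightarrow> i < 4*n - 1 \<Longrightarrow> shape_spectrum n c \<rho> ! i = s"
  using n by (auto simp: shape_spectrum_def s_def Let_def nth_append nth_Cons')

lemma shape_spectrum_weight:
  assumes n: "n \<ge> 1" and c: "c \<ge> 0" and \<rho>: "\<rho> > 0" and k: "1 \<le> k" "k \<le> 4*n - 1"
  shows "shape_spectrum n c \<rho> ! (k - 1) *
      eigen_weight n k ((\<rho> + c) / \<rho>) (1 / (4 * \<rho>\<^sup>2) * ((\<rho> + c) / (\<rho> + 2*c))) (- 2 / \<rho>) ((\<rho> + c) / \<rho>\<^sup>2)
    = sqrt ((\<rho> + c) / (\<rho> + 2*c)) *
      eigen_weight n k (c / \<rho>) ((2*\<rho>\<^sup>2 + 5*c*\<rho> + 4*c\<^sup>2) / (4*\<rho>\<^sup>2*(\<rho> + 2*c)\<^sup>2)) (- 2 / \<rho>) ((\<rho> + 2*c) / \<rho>\<^sup>2)"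
    (is "?\<sigma> * ?wg = ?s * ?wf")
proof -
  have nz: "\<rho> \<noteq> 0" "\<rho> + c \<noteq> 0" "\<rho> + 2*c \<noteq> 0" using c \<rho> by auto
  have ratio: "?\<sigma> * ?wg = ?s * ?wf" if "?\<sigma> = a * ?s" "a * ?wg = ?wf" for a
    using that by (simp add: mult.assoc[symmetric])
  consider "k \<le> 2*n - 2" | "k = 2*n - 1" | "2*n \<le> k" "k \<le> 2*n + 1" | "2*n + 2 \<le> k" by linarith
  then show ?thesis
  proof cases
    case 1
    then show ?thesis
      using k nz by (intro ratio[of "c / (\<rho> + c)"]) (simp_all add: shape_spectrum_nth[OF n] eigen_weight_def)
  next
    case 2
    then have "k - 1 = 2*n - 2" "\<not> k \<le> 2*n - 2" using n by auto
    moreover have "(2*\<rho>\<^sup>2 + 5*c*\<rho> + 4*c\<^sup>2) / ((\<rho> + 2*c) * (\<rho> + c)) * (1 / (4 * \<rho>\<^sup>2) * ((\<rho> + c) / (\<rho> + 2*c)))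
        = (2*\<rho>\<^sup>2 + 5*c*\<rho> + 4*c\<^sup>2) / (4*\<rho>\<^sup>2*(\<rho> + 2*c)\<^sup>2)"
      using nz by (simp add: power2_eq_square)
    ultimately show ?thesis
      using 2 by (intro ratio[of "(2*\<rho>\<^sup>2 + 5*c*\<rho> + 4*c\<^sup>2) / ((\<rho> + 2*c) * (\<rho> + c))"])
        (simp_all add: shape_spectrum_nth[OF n] eigen_weight_def)
  next
    case 3
    then have "2*n - 1 \<le> k - 1" "k - 1 \<le> 2*n" "\<not> k \<le> 2*n - 2" "k \<noteq> 2*n - 1" using n by auto
    moreover have e: "- 2 / \<rho> + 4 * ((\<rho> + c) / \<rho>\<^sup>2) = 2 * (\<rho> + 2*c) / \<rho>\<^sup>2"
      "- 2 / \<rho> + 4 * ((\<rho> + 2*c) / \<rho>\<^sup>2) = 2 * (\<rho> + 4*c) / \<rho>\<^sup>2"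
      using nz by (simp_all add: field_simps power2_eq_square)
    have "(\<rho> + 4*c) / (\<rho> + 2*c) * (- 2 / \<rho> + 4 * ((\<rho> + c) / \<rho>\<^sup>2))
        = - 2 / \<rho> + 4 * ((\<rho> + 2*c) / \<rho>\<^sup>2)"
      unfolding e using nz by (simp add: divide_simps) (simp add: algebra_simps)
    ultimately show ?thesis
      using 3 by (intro ratio[of "(\<rho> + 4*c) / (\<rho> + 2*c)"])
        (simp_all add: shape_spectrum_nth[OF n] eigen_weight_def)
  next
    case 4
    then have "2*n + 1 \<le> k - 1" "k - 1 < 4*n - 1" "\<not> k \<le> 2*n - 2" "k \<noteq> 2*n - 1" "\<not> k \<le> 2*n + 1"
      using k by auto
    then show ?thesis by (intro ratio[of 1]) (simp_all add: shape_spectrum_nth[OF n] eigen_weight_def)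
  qed
qed

lemma sff_form_eigvec:
  assumes n: "n \<ge> 1" and c: "c \<ge> 0" and \<rho>: "p 0 > 0" and N: "normX2 n p < 1"
    and k: "1 \<le> k" "k \<le> 4*n - 1"
  shows "sff_form n c p x (eigvec n c p k) = shape_spectrum n c (p 0) ! (k - 1) * metric_form n c p x (eigvec n c p k)"
proof -
  obtain L where L: "\<And>k1 k2 k3 k4. orbit_form n c p k1 k2 k3 k4 x (eigvec n c p k) = eigen_weight n k k1 k2 k3 k4 * L"
    using orbit_form_eigvec[OF n N k, where c = c and x = x] by blast
  have regroup: "a * b = s * d \<Longrightarrow> s * (d * L) = a * (b * L)" for a b s d :: real
    by (simp add: mult.assoc[symmetric])
  show ?thesis
    unfolding sff_form_def metric_form_def L by (rule regroup[OF shape_spectrum_weight[OF n c \<rho> k]])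
qed

text \<open>Coordinates with respect to \<^const>\<open>w_frame\<close>, obtained by solving \<open>\<omega> = \<Sum>\<^sub>b Y\<^sub>b f\<^sub>b\<close>.\<close>

definition frame_coeff :: "nat \<Rightarrow> (nat \<Rightarrow> real) \<Rightarrow> nat \<Rightarrow> (nat \<Rightarrow> real) \<Rightarrow> complex" where
  "frame_coeff n p b v =
     (if b = 0 then ell n p v / (1 - normX2 n p)
      else cW n v b + cnj (cX n p b) * ell n p v / (1 - normX2 n p))"

definition eigen_coord :: "nat \<Rightarrow> real \<Rightarrow> (nat \<Rightarrow> real) \<Rightarrow> nat \<Rightarrow> (nat \<Rightarrow> real) \<Rightarrow> real" where
  "eigen_coord n c p k v =
     (if k \<le> 2*n - 2 then v k
      else if k = 2*n - 1 then theta n c p v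
      else if even k then Re (frame_coeff n p ((k - 2*n) div 2) v)
      else Im (frame_coeff n p ((k - 2*n) div 2) v))"

lemma coord_linear_eigen_coord: "coord_linear (eigen_coord n c p k)"
  unfolding coord_linear_def eigen_coord_def frame_coeff_def
  by (simp add: theta_lincomb ell_lincomb cW_lincomb add_divide_distrib algebra_simps)

lemma frame_coeff_w_frame:
  assumes n: "n \<ge> 1" and N: "normX2 n p < 1" and b: "b < n" "b' < n"
    and W: "\<forall>j<n. cW n v j = \<mu> * w_frame n p b' j"
  shows "frame_coeff n p b v = (if b = b' then \<mu> else 0)"
proof -
  have N': "1 - complex_of_real (normX2 n p) \<noteq> 0"
    using N by (simp add: complex_eq_iff)
  show ?thesis
    using ell_w_frame[OF n b(2) W] W b N' by (auto simp: frame_coeff_def w_frame_def)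
qed

lemma vertical_index_eq:
  fixes n k l :: nat
  assumes "2*n \<le> k" "2*n \<le> l"
  shows "k = l \<longleftrightarrow> (k - 2*n) div 2 = (l - 2*n) div 2 \<and> (even k \<longleftrightarrow> even l)"
proof -
  obtain a b where "k = 2*n + a" "l = 2*n + b"
    using le_Suc_ex[OF assms(1)] le_Suc_ex[OF assms(2)] by blast
  then show ?thesis using nat_eq_iff_div2_parity[of a b] by simp
qed

lemma eigvec_horizontal_coord:
  assumes n: "n \<ge> 1" and k: "1 \<le> k" "k \<le> 2*n - 2" and l: "1 \<le> l" "l \<le> 4*n - 1"
  shows "eigvec n c p l k = (if l = k then 1 else 0)"
  using assms by (auto simp: eigvec_def theta_proj_def ebasis_def w_vec_def)

lemma eigvec_cW_eq_zero:
  assumes "n \<ge> 1" "1 \<le> l" "l < 2*n"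
  shows "cW n (eigvec n c p l) j = 0"
proof (cases "l \<le> 2*n - 2")
  case True
  then show ?thesis by (rule eigvec_horizontal(2)[OF assms(1,2)])
next
  case False
  then have "l = 2*n - 1" using assms(3) by arith
  then show ?thesis using eigvec_phi(2)[OF assms(1)] by blast
qed

lemma frame_coeff_eigvec:
  assumes n: "n \<ge> 1" and N: "normX2 n p < 1" and b: "b < n" and l: "1 \<le> l" "l \<le> 4*n - 1"
  shows "frame_coeff n p b (eigvec n c p l)
    = (if 2*n \<le> l \<and> (l - 2*n) div 2 = b then (if even l then 1 else \<i>) else 0)"
proof (cases "2*n \<le> l")
  case True
  define b' where "b' = (l - 2*n) div 2"
  have b': "b' < n" using True l by (auto simp: b'_def)
  have W: "\<forall>j<n. cW n (eigvec n c p l) j = (if even l then 1 else \<i>) * w_frame n p b' j"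
    using eigvec_vertical(3)[OF n True] by (simp add: b'_def)
  show ?thesis
    unfolding frame_coeff_w_frame[OF n N b b' W] using True by (auto simp: b'_def)
next
  case False
  then have W: "\<forall>j<n. cW n (eigvec n c p l) j = 0 * w_frame n p 0 j"
    using eigvec_cW_eq_zero[OF n l(1)] by simp
  show ?thesis
    using frame_coeff_w_frame[OF n N b _ W] n False by simp
qed

lemma eigen_coord_eigvec:
  assumes n: "n \<ge> 1" and N: "normX2 n p < 1" and k: "1 \<le> k" "k \<le> 4*n - 1" and l: "1 \<le> l" "l \<le> 4*n - 1"
  shows "eigen_coord n c p k (eigvec n c p l) = (if k = l then 1 else 0)"
proof -
  consider (horizontal) "k \<le> 2*n - 2" | (phi) "k = 2*n - 1" | (vertical) "2*n \<le> k" by linarith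
  then show ?thesis
  proof cases
    case horizontal
    then show ?thesis
      using eigvec_horizontal_coord[OF n k(1) horizontal l] by (simp add: eigen_coord_def)
  next
    case phi
    consider "l \<le> 2*n - 2" | "l = 2*n - 1" | "2*n \<le> l" by linarith
    then have "theta n c p (eigvec n c p l) = (if l = 2*n - 1 then 1 else 0)"
      by cases (use n l in \<open>simp_all add: eigvec_horizontal(3) eigvec_phi(3) eigvec_vertical(2)\<close>)
    moreover have "\<not> k \<le> 2*n - 2" using phi n by linarith
    ultimately show ?thesis
      using phi by (simp add: eigen_coord_def)
  next
    case vertical
    define b where "b = (k - 2*n) div 2"
    have b: "b < n" using vertical k by (auto simp: b_def)
    have "\<not> k \<le> 2*n - 2" "k \<noteq> 2*n - 1" using vertical n by auto
    then have "eigen_coord n c p k (eigvec n c p l) = (if even k then Re (frame_coeff n p b (eigvec n c p l))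
        else Im (frame_coeff n p b (eigvec n c p l)))"
      by (simp add: eigen_coord_def b_def)
    moreover have "k = l \<longleftrightarrow> (l - 2*n) div 2 = b \<and> (even k \<longleftrightarrow> even l)" if "2*n \<le> l"
      using vertical_index_eq[OF vertical that] unfolding b_def by auto
    ultimately show ?thesis
      using vertical by (auto simp: frame_coeff_eigvec[OF n N b l])
  qed
qed

section \<open>The shape operator\<close>

definition metric_mat :: "nat \<Rightarrow> real \<Rightarrow> (nat \<Rightarrow> real) \<Rightarrow> real mat" where
  "metric_mat n c p = functional_mat (4*n - 1) (\<lambda>i. metric_form n c p (ebasis (i + 1)))"

definition sff_mat :: "nat \<Rightarrow> real \<Rightarrow> (nat \<Rightarrow> real) \<Rightarrow> real mat" where
  "sff_mat n c p = functional_mat (4*n - 1) (\<lambda>i. sff_form n c p (ebasis (i + 1)))"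

definition eigvec_mat :: "nat \<Rightarrow> real \<Rightarrow> (nat \<Rightarrow> real) \<Rightarrow> real mat" where
  "eigvec_mat n c p = frame_mat (4*n - 1) (\<lambda>t. eigvec n c p (t + 1))"

definition spectrum_mat :: "nat \<Rightarrow> real \<Rightarrow> real \<Rightarrow> real mat" where
  "spectrum_mat n c \<rho> = mat (4*n - 1) (4*n - 1) (\<lambda>(i, j). if i = j then shape_spectrum n c \<rho> ! i else 0)"

lemma sff_mat_eigvec_mat:
  assumes n: "n \<ge> 1" and c: "c \<ge> 0" and \<rho>: "p 0 > 0" and N: "normX2 n p < 1"
  shows "sff_mat n c p * eigvec_mat n c p = metric_mat n c p * eigvec_mat n c p * spectrum_mat n c (p 0)"
proof -
  let ?m = "4*n - 1"
  have "sff_mat n c p * eigvec_mat n c p = mat ?m ?m (\<lambda>(i, t). sff_form n c p (ebasis (i + 1)) (eigvec n c p (t + 1)))"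
    unfolding sff_mat_def eigvec_mat_def
    by (rule functional_mat_mult_frame_mat[OF _ eigvec_support]) (rule coord_linear_sff_form)
  also have "\<dots> = mat ?m ?m (\<lambda>(i, t). metric_form n c p (ebasis (i + 1)) (eigvec n c p (t + 1)) * shape_spectrum n c (p 0) ! t)"
    using sff_form_eigvec[OF n c \<rho> N] by (intro cong_mat) auto
  also have "\<dots> = metric_mat n c p * eigvec_mat n c p * spectrum_mat n c (p 0)"
  proof -
    have "metric_mat n c p * eigvec_mat n c p = mat ?m ?m (\<lambda>(i, t). metric_form n c p (ebasis (i + 1)) (eigvec n c p (t + 1)))"
      unfolding metric_mat_def eigvec_mat_def
      by (rule functional_mat_mult_frame_mat[OF _ eigvec_support]) (rule coord_linear_metric_form)
    then show ?thesis
      unfolding spectrum_mat_def by (subst mat_mult_diag) auto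
  qed
  finally show ?thesis .
qed

lemma eigvec_mat_invertible:
  assumes n: "n \<ge> 1" and N: "normX2 n p < 1"
  obtains Q where "Q \<in> carrier_mat (4*n - 1) (4*n - 1)"
    "Q * eigvec_mat n c p = 1\<^sub>m (4*n - 1)" "eigvec_mat n c p * Q = 1\<^sub>m (4*n - 1)"
proof -
  let ?m = "4*n - 1"
  let ?Q = "functional_mat ?m (\<lambda>i. eigen_coord n c p (i + 1))"
  have "?Q * eigvec_mat n c p = mat ?m ?m (\<lambda>(i, t). eigen_coord n c p (i + 1) (eigvec n c p (t + 1)))"
    unfolding eigvec_mat_def
    by (rule functional_mat_mult_frame_mat[OF _ eigvec_support]) (rule coord_linear_eigen_coord)
  also have "\<dots> = 1\<^sub>m ?m"
    using eigen_coord_eigvec[OF n N] by (intro eq_matI) auto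
  finally have QP: "?Q * eigvec_mat n c p = 1\<^sub>m ?m" .
  have carrier: "?Q \<in> carrier_mat ?m ?m" "eigvec_mat n c p \<in> carrier_mat ?m ?m"
    by (simp_all add: functional_mat_def eigvec_mat_def frame_mat_def)
  show thesis
    using that[OF carrier(1) QP mat_mult_left_right_inverse[OF carrier QP]] .
qed

lemma metric_mat_left_inverse:
  assumes n: "n \<ge> 1" and c: "c \<ge> 0" and \<rho>: "p 0 > 0" and N: "normX2 n p < 1"
  obtains Gi where "Gi \<in> carrier_mat (4*n - 1) (4*n - 1)" "Gi * metric_mat n c p = 1\<^sub>m (4*n - 1)"
proof (rule kernel_trivial_left_inverse)
  show "metric_mat n c p \<in> carrier_mat (4*n - 1) (4*n - 1)"
    by (simp add: metric_mat_def functional_mat_def)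
  have "{1..4*n - 1} = {1..<4*n}" using n by auto
  then have pos: "metric_form n c p v v > 0" if "\<exists>i\<in>{1..4*n - 1}. v i \<noteq> 0" for v
    using that by (intro metric_form_pos[OF n c \<rho> N]) simp
  show "y = 0\<^sub>v (4*n - 1)"
    if "y \<in> carrier_vec (4*n - 1)" "metric_mat n c p *\<^sub>v y = 0\<^sub>v (4*n - 1)" for y
    using gram_mat_kernel_trivial[OF coord_linear_metric_form pos] that unfolding metric_mat_def by blast
qed

lemma is_shape_operator_iff:
  assumes n: "n \<ge> 1" and c: "c \<ge> 0" and \<rho>: "p 0 > 0"
  shows "is_shape_operator n c p S \<longleftrightarrow>
    S \<in> carrier_mat (4*n - 1) (4*n - 1) \<and> metric_mat n c p * S = sff_mat n c p"
proof -
  let ?m = "4*n - 1"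
  have G: "(metric_mat n c p * S) $$ (j, i) = (\<Sum>r<?m. S $$ (r, i) * gN n c p (r + 1) (j + 1))"
    if "S \<in> carrier_mat ?m ?m" "i < ?m" "j < ?m" for i j
    using that by (simp add: metric_mat_def functional_mat_def scalar_prod_def lessThan_atLeast0 gN_tangent
        metric_form_sym[of n c p "ebasis (Suc j)"] mult.commute)
  have F: "sff_mat n c p $$ (j, i) = sff n c p (i + 1) (j + 1)" if "i < ?m" "j < ?m" for i j
    using that by (simp add: sff_mat_def functional_mat_def sff_eq_sff_form[of n c p, OF n c \<rho>] sff_form_sym)
  show ?thesis
  proof (cases "S \<in> carrier_mat ?m ?m")
    case True
    then have "metric_mat n c p * S \<in> carrier_mat ?m ?m" "sff_mat n c p \<in> carrier_mat ?m ?m"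
      by (auto simp: metric_mat_def sff_mat_def functional_mat_def)
    then have "metric_mat n c p * S = sff_mat n c p
        \<longleftrightarrow> (\<forall>i<?m. \<forall>j<?m. (metric_mat n c p * S) $$ (j, i) = sff_mat n c p $$ (j, i))"
      by (auto simp: mat_eq_iff)
    then show ?thesis
      using True unfolding is_shape_operator_def by (simp add: G F)
  qed (simp add: is_shape_operator_def)
qed

lemma shape_operator_similar_spectrum_mat:
  assumes n: "n \<ge> 1" and c: "c \<ge> 0" and \<rho>: "p 0 > 0" and N: "normX2 n p < 1"
  shows "\<exists>!S. is_shape_operator n c p S"
    and "is_shape_operator n c p S \<Longrightarrow> similar_mat S (spectrum_mat n c (p 0))"
proof -
  let ?m = "4*n - 1"
  let ?G = "metric_mat n c p" and ?F = "sff_mat n c p" and ?P = "eigvec_mat n c p"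
    and ?D = "spectrum_mat n c (p 0)"
  obtain Q where Q: "Q \<in> carrier_mat ?m ?m" "Q * ?P = 1\<^sub>m ?m" "?P * Q = 1\<^sub>m ?m"
    using eigvec_mat_invertible[OF n N] .
  obtain Gi where Gi: "Gi \<in> carrier_mat ?m ?m" "Gi * ?G = 1\<^sub>m ?m"
    using metric_mat_left_inverse[of n c p, OF n c \<rho> N] .
  have G: "?G \<in> carrier_mat ?m ?m" and F: "?F \<in> carrier_mat ?m ?m"
    and P: "?P \<in> carrier_mat ?m ?m" and D: "?D \<in> carrier_mat ?m ?m"
    by (simp_all add: metric_mat_def sff_mat_def eigvec_mat_def spectrum_mat_def functional_mat_def frame_mat_def)
  define S0 where "S0 = ?P * ?D * Q"
  have S0: "S0 \<in> carrier_mat ?m ?m" unfolding S0_def using P D Q(1) by simp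
  have "?G * S0 = ?G * ?P * ?D * Q"
    unfolding S0_def using G P D Q(1) by (simp add: assoc_mult_mat[of _ ?m ?m _ ?m])
  also have "\<dots> = ?F * (?P * Q)"
    unfolding sff_mat_eigvec_mat[of n c p, OF n c \<rho> N, symmetric] using F P Q(1) by (simp add: assoc_mult_mat)
  also have "\<dots> = ?F" using F Q(3) by simp
  finally have shape0: "is_shape_operator n c p S0"
    using S0 is_shape_operator_iff[of n c p, OF n c \<rho>] by blast
  have unique: "S = S0" if "is_shape_operator n c p S" for S
  proof -
    have "S \<in> carrier_mat ?m ?m" "?G * S = ?F" "?G * S0 = ?F"
      using that shape0 is_shape_operator_iff[of n c p, OF n c \<rho>] by blast+
    then have "Gi * ?G * S = Gi * ?G * S0"
      using Gi(1) G S0 by (simp add: assoc_mult_mat[of Gi ?m ?m])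
    then show ?thesis
      using Gi(2) \<open>S \<in> carrier_mat ?m ?m\<close> S0 by simp
  qed
  show "\<exists>!S. is_shape_operator n c p S"
    using shape0 unique by blast
  show "similar_mat S ?D" if "is_shape_operator n c p S"
    using similar_matI[of S0 ?D ?P Q ?m] P D Q S0 unique[OF that] unfolding S0_def by auto
qed

lemma char_poly_spectrum_mat:
  assumes "n \<ge> 1"
  shows "char_poly (spectrum_mat n c \<rho>) = (\<Prod>a\<leftarrow>shape_spectrum n c \<rho>. [:- a, 1:])"
proof -
  have "diag_mat (spectrum_mat n c \<rho>) = shape_spectrum n c \<rho>"
    using assms by (intro nth_equalityI) (auto simp: diag_mat_def spectrum_mat_def length_shape_spectrum)
  moreover have "upper_triangular (spectrum_mat n c \<rho>)"
    by (auto simp: spectrum_mat_def)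
  ultimately show ?thesis
    using char_poly_upper_triangular[of "spectrum_mat n c \<rho>" "4*n - 1"] by (simp add: spectrum_mat_def)
qed

lemma mat_trace_spectrum_mat:
  "n \<ge> 1 \<Longrightarrow> mat_trace (spectrum_mat n c \<rho>) = sum_list (shape_spectrum n c \<rho>)"
  by (simp add: mat_trace_def spectrum_mat_def sum_list_sum_nth length_shape_spectrum lessThan_atLeast0)

lemma prod_list_shape_spectrum:
  fixes c \<rho> :: real
  defines "s \<equiv> sqrt ((\<rho> + c) / (\<rho> + 2*c))"
  shows "(\<Prod>a\<leftarrow>shape_spectrum n c \<rho>. [:- a, 1:])
    = [:- (c / (\<rho> + c) * s), 1:] ^ (2*n - 2) * [:- ((2*\<rho>\<^sup>2 + 5*c*\<rho> + 4*c\<^sup>2) / ((\<rho> + 2*c) * (\<rho> + c)) * s), 1:]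
      * [:- ((\<rho> + 4*c) / (\<rho> + 2*c) * s), 1:] ^ 2 * [:- s, 1:] ^ (2*n - 2)"
  by (simp only: shape_spectrum_def s_def Let_def map_append prod_list.append map_replicate
      prod_list_replicate list.map prod_list.Cons prod_list.Nil mult_1_right mult.assoc)

lemma sum_list_shape_spectrum:
  fixes c \<rho> :: real
  defines "s \<equiv> sqrt ((\<rho> + c) / (\<rho> + 2*c))"
  assumes n: "n \<ge> 1" and \<rho>: "\<rho> > 0" and c: "c \<ge> 0"
  shows "sum_list (shape_spectrum n c \<rho>)
    = ((2 * real n + 2) * \<rho>\<^sup>2 + (8 * real n + 7) * c * \<rho> + (8 * real n + 4) * c\<^sup>2) / ((\<rho> + c) * (\<rho> + 2*c)) * s"
proof -
  have "sum_list (shape_spectrum n c \<rho>) = (2 * real n - 2) * (c / (\<rho> + c) * s)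
      + (2*\<rho>\<^sup>2 + 5*c*\<rho> + 4*c\<^sup>2) / ((\<rho> + 2*c) * (\<rho> + c)) * s
      + 2 * ((\<rho> + 4*c) / (\<rho> + 2*c) * s) + (2 * real n - 2) * s"
    using n by (simp add: shape_spectrum_def s_def Let_def sum_list_replicate of_nat_diff)
  also have "\<dots> = ((2 * real n + 2) * \<rho>\<^sup>2 + (8 * real n + 7) * c * \<rho> + (8 * real n + 4) * c\<^sup>2)
      / ((\<rho> + c) * (\<rho> + 2*c)) * s"
  proof -
    have "\<rho> + c > 0" "\<rho> + 2*c > 0" using \<rho> c by auto
    then show ?thesis by (simp add: divide_simps) (simp add: algebra_simps power2_eq_square)
  qed
  finally show ?thesis .
qed

theorem proposition3p6:
  fixes n :: nat and c \<rho> :: real and p :: "nat \<Rightarrow> real"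
  assumes "n \<ge> 1" and "c \<ge> 0" and "\<rho> > 0"
    and "in_Nbar n p" and "p 0 = \<rho>"
  defines "s \<equiv> sqrt ((\<rho> + c) / (\<rho> + 2*c))"
  defines "\<sigma>1 \<equiv> c / (\<rho> + c) * s"
    and "\<sigma>2 \<equiv> (2*\<rho>\<^sup>2 + 5*c*\<rho> + 4*c\<^sup>2) / ((\<rho> + 2*c) * (\<rho> + c)) * s"
    and "\<sigma>3 \<equiv> (\<rho> + 4*c) / (\<rho> + 2*c) * s"
    and "\<sigma>4 \<equiv> s"
  shows "(\<exists>!S. is_shape_operator n c p S)
    \<and> (\<forall>S. is_shape_operator n c p S \<longrightarrow>
          char_poly S = [:-\<sigma>1, 1:] ^ (2*n - 2) * [:-\<sigma>2, 1:] * [:-\<sigma>3, 1:] ^ 2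
                          * [:-\<sigma>4, 1:] ^ (2*n - 2)
          \<and> mat_trace S = ((2 * real n + 2) * \<rho>\<^sup>2 + (8 * real n + 7) * c * \<rho> + (8 * real n + 4) * c\<^sup>2)
                        / ((\<rho> + c) * (\<rho> + 2*c)) * s)
    \<and> (c > 0 \<longrightarrow> (\<forall>v :: nat \<Rightarrow> real. (\<exists>i\<in>{1..<4*n}. v i \<noteq> 0) \<longrightarrow>
          (\<Sum>i\<in>{1..<4*n}. \<Sum>j\<in>{1..<4*n}. v i * v j * sff n c p i j) > 0))"
proof -
  have \<rho>: "p 0 > 0" and N: "normX2 n p < 1"
    using assms(3-5) by (auto simp: in_Nbar_def)
  note similar = shape_operator_similar_spectrum_mat[OF assms(1,2) \<rho> N]
  have "char_poly S = [:-\<sigma>1, 1:] ^ (2*n - 2) * [:-\<sigma>2, 1:] * [:-\<sigma>3, 1:] ^ 2 * [:-\<sigma>4, 1:] ^ (2*n - 2)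
      \<and> mat_trace S = ((2 * real n + 2) * \<rho>\<^sup>2 + (8 * real n + 7) * c * \<rho> + (8 * real n + 4) * c\<^sup>2)
          / ((\<rho> + c) * (\<rho> + 2*c)) * s"
    if "is_shape_operator n c p S" for S
  proof -
    have "char_poly S = char_poly (spectrum_mat n c \<rho>)" "mat_trace S = mat_trace (spectrum_mat n c \<rho>)"
      using char_poly_similar[OF similar(2)[OF that]] mat_trace_similar[OF similar(2)[OF that]] assms(5)
      by simp_all
    then show ?thesis
      unfolding char_poly_spectrum_mat[OF assms(1)] prod_list_shape_spectrum mat_trace_spectrum_mat[OF assms(1)]
        sum_list_shape_spectrum[OF assms(1,3,2)] s_def \<sigma>1_def \<sigma>2_def \<sigma>3_def \<sigma>4_def
      by (simp only:)
  qed
  then show ?thesis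
    using similar(1) sff_double_sum_pos[OF assms(1) _ \<rho> N] by blast
qed

end
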